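(* Let $n\geq 2$ and let $\{e_l\}_{l\ge1}$ be the standard orthonormal basis of $\ell^2(\mathbb{N})$. Define $V_k$ ($1\le k\le n$) on $\ell^2(\mathbb{N})$ by $V_ke_l=e_{n(l-1)+k}$. Then $V=(V_1,\ldots,V_n)$ is an isometric $n$-tuple that is irreducible (i.e. $\mathrm{W}^*(V)=B(\ell^2(\mathbb{N}))$) and of dilation type.
   Context: An $n$-tuple is isometric if $V_i^*V_j=\delta_{ij}I$. $\mathrm{W}^*(V)$ is the von Neumann algebra generated by $V_1,\dots,V_n$. $F_n^2$ is the full Fock space over $\mathbb{C}^n$ with basis $\{\xi_w:w\in\mathbb{F}_n^*\}$, $L_i\xi_w=\xi_{iw}$; $\mathcal{A}_n$ / $\mathcal{L}_n$ are the norm-closed / weakly closed unital algebras generated by $L_1,\dots,L_n$. An isometric tuple is absolutely continuous if the homomorphism $L_w\mapsto V_w$ of $\mathcal{A}_n$ extends to a weak-* continuous representation of $\mathcal{L}_n$; singular if it has no absolutely continuous restriction to a nonzero invariant subspace; of dilation type if it has no nonzero direct summand that is absolutely continuous or singular. *)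

theory Defs
  imports "HOL-Analysis.Analysis"
begin

type_synonym 'a vec = "'a \<Rightarrow> complex"
type_synonym ('a, 'b) op = "'a vec \<Rightarrow> 'b vec"

definition ell2 :: "'a vec set" where
  "ell2 = {x. (\<lambda>i. (cmod (x i))^2) summable_on UNIV}"

definition vinner :: "'a vec \<Rightarrow> 'a vec \<Rightarrow> complex" where
  "vinner x y = infsum (\<lambda>i. cnj (x i) * y i) UNIV"

definition vnorm :: "'a vec \<Rightarrow> real" where
  "vnorm x = sqrt (infsum (\<lambda>i. (cmod (x i))^2) UNIV)"

definition vzero :: "'a vec" where "vzero = (\<lambda>i. 0)"

definition closed_subspace :: "'a vec set \<Rightarrow> 'a vec set \<Rightarrow> bool" where
  "closed_subspace H M \<longleftrightarrow> M \<subseteq> H \<and> vzero \<in> M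
     \<and> (\<forall>x\<in>M. \<forall>y\<in>M. \<forall>a b. (\<lambda>i. a * x i + b * y i) \<in> M)
     \<and> (\<forall>s x. (\<forall>k. s k \<in> M) \<and> x \<in> ell2 \<and> ((\<lambda>k. vnorm (\<lambda>i. s k i - x i)) \<longlonglongrightarrow> 0) \<longrightarrow> x \<in> M)"

definition ortho_compl :: "'a vec set \<Rightarrow> 'a vec set \<Rightarrow> 'a vec set" where
  "ortho_compl H M = {y \<in> H. \<forall>x\<in>M. vinner x y = 0}"

text \<open>Bounded linear operator on the (closed subspace) H; only its values on H matter.\<close>
definition bounded_op :: "'a vec set \<Rightarrow> ('a, 'a) op \<Rightarrow> bool" where
  "bounded_op H T \<longleftrightarrow> (\<forall>x\<in>H. T x \<in> H)
     \<and> (\<forall>x\<in>H. \<forall>y\<in>H. \<forall>a b. T (\<lambda>i. a * x i + b * y i) = (\<lambda>i. a * T x i + b * T y i))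
     \<and> (\<exists>C. \<forall>x\<in>H. vnorm (T x) \<le> C * vnorm x)"

definition adjoint_op :: "'a vec set \<Rightarrow> ('a, 'a) op \<Rightarrow> ('a, 'a) op" where
  "adjoint_op H T = (SOME S. bounded_op H S \<and> (\<forall>x\<in>H. \<forall>y\<in>H. vinner (T x) y = vinner x (S y)))"

definition commutant :: "'a vec set \<Rightarrow> ('a, 'a) op set \<Rightarrow> ('a, 'a) op set" where
  "commutant H S = {T. bounded_op H T \<and> (\<forall>A\<in>S. \<forall>x\<in>H. T (A x) = A (T x))}"

definition word_op :: "(nat \<Rightarrow> ('a, 'a) op) \<Rightarrow> nat list \<Rightarrow> ('a, 'a) op" where
  "word_op A w = foldr (\<lambda>i T. A i \<circ> T) w id"

definition isometric_tuple :: "'a vec set \<Rightarrow> nat \<Rightarrow> (nat \<Rightarrow> ('a, 'a) op) \<Rightarrow> bool" where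
  "isometric_tuple H n V \<longleftrightarrow> (\<forall>i\<in>{1..n}. bounded_op H (V i))
     \<and> (\<forall>i\<in>{1..n}. \<forall>j\<in>{1..n}. \<forall>x\<in>H.
           adjoint_op H (V i) (V j x) = (if i = j then x else vzero))"

text \<open>W*(V): the von Neumann algebra generated by V_1..V_n (double commutant of V_i, V_i^*).\<close>
definition wstar_alg :: "'a vec set \<Rightarrow> nat \<Rightarrow> (nat \<Rightarrow> ('a, 'a) op) \<Rightarrow> ('a, 'a) op set" where
  "wstar_alg H n V = commutant H (commutant H (V ` {1..n} \<union> adjoint_op H ` V ` {1..n}))"

definition invariant_sub :: "'a vec set \<Rightarrow> nat \<Rightarrow> (nat \<Rightarrow> ('a, 'a) op) \<Rightarrow> 'a vec set \<Rightarrow> bool" where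
  "invariant_sub H n V M \<longleftrightarrow> closed_subspace H M \<and> (\<forall>i\<in>{1..n}. \<forall>x\<in>M. V i x \<in> M)"

definition reducing_sub :: "'a vec set \<Rightarrow> nat \<Rightarrow> (nat \<Rightarrow> ('a, 'a) op) \<Rightarrow> 'a vec set \<Rightarrow> bool" where
  "reducing_sub H n V M \<longleftrightarrow> invariant_sub H n V M \<and> invariant_sub H n V (ortho_compl H M)"

definition wot :: "'a vec set \<Rightarrow> ('a, 'a) op topology" where
  "wot H = topology_generated_by
     {{T. vinner (T x) y \<in> U} | x y U. x \<in> H \<and> y \<in> H \<and> open U}"

definition wstar_top :: "'a vec set \<Rightarrow> ('a, 'a) op topology" where
  "wstar_top H = topology_generated_by
     {{T. (\<Sum>k. vinner (T (xs k)) (ys k)) \<in> U} | xs ys U.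
        (\<forall>k. xs k \<in> H \<and> ys k \<in> H) \<and> summable (\<lambda>k. (vnorm (xs k))^2)
        \<and> summable (\<lambda>k. (vnorm (ys k))^2) \<and> open U}"

definition words :: "nat \<Rightarrow> nat list set" where
  "words n = {w. set w \<subseteq> {1..n}}"

definition fock :: "nat \<Rightarrow> nat list vec set" where
  "fock n = {x \<in> ell2. \<forall>w. x w \<noteq> 0 \<longrightarrow> w \<in> words n}"

text \<open>Left creation operators: L_i xi_w = xi_{iw}.\<close>
definition Lcre :: "nat \<Rightarrow> (nat list, nat list) op" where
  "Lcre i x = (\<lambda>u. if u \<noteq> [] \<and> hd u = i then x (tl u) else 0)"

definition poly_ops :: "nat \<Rightarrow> (nat list, nat list) op set" where
  "poly_ops n = {T. \<exists>S c. finite S \<and> S \<subseteq> words n \<and>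
       (\<forall>x. T x = (\<lambda>u. \<Sum>w\<in>S. c w * word_op Lcre w x u))}"

definition Ln :: "nat \<Rightarrow> (nat list, nat list) op set" where
  "Ln n = {T. bounded_op (fock n) T} \<inter> (wot (fock n) closure_of poly_ops n)"

definition abs_cont :: "nat \<Rightarrow> 'a vec set \<Rightarrow> (nat \<Rightarrow> ('a, 'a) op) \<Rightarrow> bool" where
  "abs_cont n M V \<longleftrightarrow> (\<exists>\<Phi> :: (nat list, nat list) op \<Rightarrow> ('a, 'a) op.
      (\<forall>T\<in>Ln n. bounded_op M (\<Phi> T))
    \<and> (\<forall>w\<in>words n. \<forall>x\<in>M. \<Phi> (word_op Lcre w) x = word_op V w x)
    \<and> (\<forall>S\<in>Ln n. \<forall>T\<in>Ln n. \<forall>a b. \<forall>x\<in>M.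
          \<Phi> (\<lambda>y u. a * S y u + b * T y u) x = (\<lambda>u. a * \<Phi> S x u + b * \<Phi> T x u))
    \<and> (\<forall>S\<in>Ln n. \<forall>T\<in>Ln n. \<forall>x\<in>M. \<Phi> (S \<circ> T) x = \<Phi> S (\<Phi> T x))
    \<and> (\<forall>x\<in>M. \<Phi> id x = x)
    \<and> continuous_map (subtopology (wstar_top (fock n)) (Ln n)) (wstar_top M) \<Phi>)"

definition singular_tuple :: "nat \<Rightarrow> 'a vec set \<Rightarrow> (nat \<Rightarrow> ('a, 'a) op) \<Rightarrow> bool" where
  "singular_tuple n H V \<longleftrightarrow>
     (\<forall>M. invariant_sub H n V M \<and> M \<noteq> {vzero} \<longrightarrow> \<not> abs_cont n M V)"

definition dilation_type :: "nat \<Rightarrow> 'a vec set \<Rightarrow> (nat \<Rightarrow> ('a, 'a) op) \<Rightarrow> bool" where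
  "dilation_type n H V \<longleftrightarrow>
     (\<forall>M. reducing_sub H n V M \<and> M \<noteq> {vzero} \<longrightarrow>
          \<not> abs_cont n M V \<and> \<not> singular_tuple n M V)"

end

theory Submission
  imports Defs
begin

text \<open>
  Every basis vector is \<open>V\<^sub>w e\<^sub>0\<close> for a word \<open>w\<close>, and the fixed vectors of \<open>V\<^sub>1\<close> are the
  multiples of \<open>e\<^sub>0\<close>. So an operator commuting with all \<open>V\<^sub>k\<close> maps \<open>e\<^sub>0\<close> to \<open>c e\<^sub>0\<close> and is
  \<open>c I\<close>; hence \<open>W\<^sup>*(V) = B(\<ell>\<^sup>2)\<close>.

  A nonzero reducing subspace \<open>M\<close> is everything. If some \<open>x \<in> M\<close> has \<open>x\<^sub>0 \<noteq> 0\<close>, the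
  averages \<open>K\<^sup>-\<^sup>1 \<Sum>\<^sub>k\<^sub><\<^sub>K V\<^sub>1\<^bsup>kN\<^esup> x \<in> M\<close> tend to \<open>x\<^sub>0 e\<^sub>0\<close>, because \<open>V\<^sub>1\<^bsup>kN\<^esup>\<close>
  spreads the part of \<open>x\<close> supported in \<open>[1, N)\<close> over pairwise disjoint supports. Then
  \<open>e\<^sub>0 \<in> M\<close>, and \<open>M\<close> contains every \<open>V\<^sub>w e\<^sub>0\<close>. Otherwise \<open>e\<^sub>0\<close> lies in the reducing subspace
  \<open>M\<^sup>\<bottom>\<close>, so \<open>M\<^sup>\<bottom>\<close> is everything.

  It remains that \<open>V\<close> itself is neither absolutely continuous nor singular. The powers
  \<open>L\<^sub>1\<^sup>k\<close> tend to \<open>0\<close> weak-*, while \<open>V\<^sub>1\<^sup>k e\<^sub>0 = e\<^sub>0\<close>; so \<open>L\<^sub>w \<mapsto> V\<^sub>w\<close> is not weak-*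
  continuous. The vectors \<open>V\<^sub>w e\<^sub>1\<close> are distinct basis vectors, and on their closed span
  \<open>V\<close> is unitarily equivalent to \<open>L\<close>, an absolutely continuous restriction.
\<close>

section \<open>Square-summable families\<close>

definition sqnorm :: "'a vec \<Rightarrow> real" where
  "sqnorm x = infsum (\<lambda>i. (cmod (x i))^2) UNIV"

lemma sqnorm_nonneg: "sqnorm x \<ge> 0"
  unfolding sqnorm_def by (rule infsum_nonneg) simp

lemma vnorm_eq_sqrt_sqnorm: "vnorm x = sqrt (sqnorm x)"
  by (simp add: vnorm_def sqnorm_def)

lemma vnorm_power2: "(vnorm x)^2 = sqnorm x"
  by (simp add: vnorm_eq_sqrt_sqnorm sqnorm_nonneg)

lemma mem_ell2_iff: "x \<in> ell2 \<longleftrightarrow> (\<lambda>i. (cmod (x i))^2) summable_on UNIV"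
  by (simp add: ell2_def)

lemma vzero_ell2 [simp]: "vzero \<in> ell2"
  by (simp add: ell2_def vzero_def)

lemma cmod_add_power2_le: "(cmod (u + v))^2 \<le> 2 * (cmod u)^2 + 2 * (cmod v)^2"
proof -
  have "(cmod (u + v))^2 \<le> (cmod u + cmod v)^2"
    by (simp add: power_mono norm_triangle_ineq)
  also have "\<dots> \<le> 2 * (cmod u)^2 + 2 * (cmod v)^2"
    by (smt (verit) sum_squares_bound zero_le_power2 power2_sum)
  finally show ?thesis .
qed

lemma cmod_mult_le_weighted:
  assumes "e > 0"
  shows "cmod (u * v) \<le> (e * (cmod u)^2 + (cmod v)^2 / e) / 2"
proof -
  define a b where "a = cmod u" and "b = cmod v"
  have "2 * e * (a * b) \<le> (e * a)^2 + b^2"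
    using zero_le_power2[of "e * a - b"] by (simp add: power2_diff algebra_simps)
  then have "a * b \<le> ((e * a)^2 + b^2) / (2 * e)"
    using assms by (simp add: field_simps)
  also have "\<dots> = (e * a^2 + b^2 / e) / 2"
    using assms by (simp add: field_simps power2_eq_square)
  finally show ?thesis by (simp add: norm_mult a_def b_def)
qed

lemma ell2_lin_comb:
  assumes "x \<in> ell2" "y \<in> ell2"
  shows "(\<lambda>i. a * x i + b * y i) \<in> ell2"
proof -
  have "(\<lambda>i. 2 * (cmod a)^2 * (cmod (x i))^2 + 2 * (cmod b)^2 * (cmod (y i))^2) summable_on UNIV"
    using assms unfolding mem_ell2_iff
    by (intro summable_on_add summable_on_cmult_right) auto
  then show ?thesis
    unfolding mem_ell2_iff
  proof (rule summable_on_comparison_test)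
    show "(cmod (a * x i + b * y i))^2 \<le> 2 * (cmod a)^2 * (cmod (x i))^2 + 2 * (cmod b)^2 * (cmod (y i))^2" for i
      using cmod_add_power2_le[of "a * x i" "b * y i"] by (simp add: norm_mult power_mult_distrib)
  qed simp
qed

lemma ell2_restrict: "x \<in> ell2 \<Longrightarrow> (\<lambda>i. if P i then x i else 0) \<in> ell2"
  unfolding mem_ell2_iff by (rule summable_on_comparison_test) auto

lemma sqnorm_restrict: "sqnorm (\<lambda>i. if i \<in> B then x i else 0) = infsum (\<lambda>i. (cmod (x i))^2) B"
  unfolding sqnorm_def by (rule infsum_cong_neutral) auto

lemma sqnorm_restrict_le: "x \<in> ell2 \<Longrightarrow> sqnorm (\<lambda>i. if P i then x i else 0) \<le> sqnorm x"
  unfolding sqnorm_def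
  by (rule infsum_mono) (use ell2_restrict[of x P] in \<open>auto simp: mem_ell2_iff\<close>)

lemma sqnorm_add_le:
  assumes "x \<in> ell2" "y \<in> ell2"
  shows "sqnorm (\<lambda>i. x i + y i) \<le> 2 * sqnorm x + 2 * sqnorm y"
proof -
  have sx: "(\<lambda>i. (cmod (x i))^2) summable_on UNIV" and sy: "(\<lambda>i. (cmod (y i))^2) summable_on UNIV"
    using assms unfolding mem_ell2_iff by auto
  have "sqnorm (\<lambda>i. x i + y i) \<le> infsum (\<lambda>i. 2 * (cmod (x i))^2 + 2 * (cmod (y i))^2) UNIV"
    unfolding sqnorm_def
    by (rule infsum_mono) (use ell2_lin_comb[OF assms, of 1 1] sx sy cmod_add_power2_le
        in \<open>auto simp: mem_ell2_iff intro!: summable_on_add summable_on_cmult_right\<close>)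
  also have "\<dots> = 2 * sqnorm x + 2 * sqnorm y"
    unfolding sqnorm_def using sx sy
    by (simp add: infsum_add summable_on_cmult_right infsum_cmult_right)
  finally show ?thesis .
qed

lemma vinner_abs_summable:
  assumes "x \<in> ell2" "y \<in> ell2"
  shows "(\<lambda>i. norm (cnj (x i) * y i)) summable_on UNIV"
proof (rule Infinite_Sum.abs_summable_on_comparison_test')
  show "(\<lambda>i. (1/2) * ((cmod (x i))^2 + (cmod (y i))^2)) summable_on UNIV"
    using assms unfolding mem_ell2_iff by (intro summable_on_cmult_right summable_on_add)
  show "norm (cnj (x i) * y i) \<le> (1/2) * ((cmod (x i))^2 + (cmod (y i))^2)" for i
    using cmod_mult_le_weighted[of 1 "cnj (x i)" "y i"] by simp
qed

lemma cmod_vinner_le: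
  assumes "x \<in> ell2" "y \<in> ell2" "e > 0"
  shows "cmod (vinner x y) \<le> (e * sqnorm x + sqnorm y / e) / 2"
proof -
  have sx: "(\<lambda>i. (cmod (x i))^2) summable_on UNIV" and sy: "(\<lambda>i. (cmod (y i))^2) summable_on UNIV"
    using assms unfolding mem_ell2_iff by auto
  have "cmod (vinner x y) \<le> infsum (\<lambda>i. cmod (cnj (x i) * y i)) UNIV"
    unfolding vinner_def by (rule norm_infsum_bound[OF vinner_abs_summable[OF assms(1,2)]])
  also have "\<dots> \<le> infsum (\<lambda>i. (1/2) * (e * (cmod (x i))^2 + (1/e) * (cmod (y i))^2)) UNIV"
  proof (rule infsum_mono[OF vinner_abs_summable[OF assms(1,2)]])
    show "(\<lambda>i. (1/2) * (e * (cmod (x i))^2 + (1/e) * (cmod (y i))^2)) summable_on UNIV"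
      using sx sy by (intro summable_on_cmult_right summable_on_add)
    show "cmod (cnj (x i) * y i) \<le> (1/2) * (e * (cmod (x i))^2 + (1/e) * (cmod (y i))^2)" for i
      using cmod_mult_le_weighted[OF assms(3), of "cnj (x i)" "y i"] by simp
  qed
  also have "\<dots> = (1/2) * (e * sqnorm x + (1/e) * sqnorm y)"
    unfolding sqnorm_def
    by (simp only: infsum_cmult_right'
        infsum_add[OF summable_on_cmult_right[OF sx] summable_on_cmult_right[OF sy]])
  also have "\<dots> = (e * sqnorm x + sqnorm y / e) / 2"
    by simp
  finally show ?thesis .
qed

lemma vinner_self: "vinner x x = complex_of_real (sqnorm x)"
proof (cases "(\<lambda>i. (cmod (x i))^2) summable_on UNIV")
  case True
  have "vinner x x = infsum (\<lambda>i. complex_of_real ((cmod (x i))^2)) UNIV"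
    unfolding vinner_def
    by (rule infsum_cong) (simp only: complex_norm_square mult.commute[of "cnj _"])
  also have "\<dots> = complex_of_real (sqnorm x)"
    unfolding sqnorm_def by (rule infsumI, rule has_sum_of_real) (use True in simp)
  finally show ?thesis .
next
  case False
  have "\<not> (\<lambda>i. cnj (x i) * x i) summable_on UNIV"
  proof
    assume "(\<lambda>i. cnj (x i) * x i) summable_on UNIV"
    from summable_on_bounded_linear[OF bounded_linear_Re this]
    have "(\<lambda>i. Re (cnj (x i) * x i)) summable_on UNIV" by simp
    also have "(\<lambda>i. Re (cnj (x i) * x i)) = (\<lambda>i. (cmod (x i))^2)"
      by (rule ext) (metis Re_complex_of_real complex_norm_square mult.commute)
    finally show False using False by simp
  qed
  then show ?thesis using False by (simp add: vinner_def sqnorm_def infsum_not_exists)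
qed

lemma cmod_power2_le_sqnorm:
  assumes "x \<in> ell2" shows "(cmod (x j))^2 \<le> sqnorm x"
  using finite_sum_le_infsum[of "\<lambda>i. (cmod (x i))^2" UNIV "{j}"] assms
  by (simp add: sqnorm_def mem_ell2_iff)

lemma cmod_le_vnorm: "x \<in> ell2 \<Longrightarrow> cmod (x j) \<le> vnorm x"
  unfolding vnorm_eq_sqrt_sqnorm using cmod_power2_le_sqnorm[of x j] by (simp add: real_le_rsqrt)

lemma sqnorm_eq_0_imp_vzero:
  assumes "x \<in> ell2" "sqnorm x = 0" shows "x = vzero"
  using cmod_power2_le_sqnorm[OF assms(1)] assms(2) by (auto simp: vzero_def)

lemma summable_on_tail_le:
  fixes f :: "'a \<Rightarrow> real"
  assumes "f summable_on UNIV" "\<And>i. f i \<ge> 0" "e > 0"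
  obtains F where "finite F" "\<And>B. B \<inter> F = {} \<Longrightarrow> infsum f B \<le> e"
proof -
  obtain F where F: "finite F" "dist (sum f F) (infsum f UNIV) \<le> e"
    using infsum_finite_approximation[OF assms(1) assms(3)] by blast
  have "infsum f B \<le> e" if "B \<inter> F = {}" for B
  proof -
    have sB: "f summable_on B" and sBF: "f summable_on (B \<union> F)"
      by (rule summable_on_subset[OF assms(1)], simp)+
    have "infsum f (B \<union> F) = infsum f B + sum f F"
      using infsum_Un_disjoint[OF sB summable_on_finite[OF F(1)] that] F(1) by simp
    moreover have "infsum f (B \<union> F) \<le> infsum f UNIV"
      by (rule infsum_mono2[OF sBF assms(1)]) (use assms(2) in simp_all)
    ultimately show ?thesis using F(2) by (simp add: dist_real_def)
  qed
  with F(1) show ?thesis by (rule that)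
qed

lemma summable_on_tail_le_nat:
  fixes f :: "nat \<Rightarrow> real"
  assumes "f summable_on UNIV" "\<And>i. f i \<ge> 0" "e > 0"
  obtains N where "\<And>B. B \<subseteq> {N..} \<Longrightarrow> infsum f B \<le> e"
proof -
  obtain F where F: "finite F" "\<And>B. B \<inter> F = {} \<Longrightarrow> infsum f B \<le> e"
    using summable_on_tail_le[OF assms] by blast
  obtain N where "F \<subseteq> {..<N}" using F(1) finite_nat_bounded by blast
  then have "infsum f B \<le> e" if "B \<subseteq> {N..}" for B
    using F(2) that by (meson atLeast_iff disjoint_iff lessThan_iff not_le subsetD)
  then show ?thesis by (rule that)
qed

definition basis_vec :: "'a \<Rightarrow> 'a vec" where
  "basis_vec j = (\<lambda>i. if i = j then 1 else 0)"

lemma basis_vec_ell2 [simp]: "basis_vec j \<in> ell2"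
proof -
  have "(\<lambda>i. (cmod (basis_vec j i))^2) summable_on {j}" by simp
  then show ?thesis
    unfolding mem_ell2_iff by (subst summable_on_cong_neutral[where T="{j}"]) (auto simp: basis_vec_def)
qed

lemma vinner_basis_vec_left: "vinner (basis_vec j) y = y j"
proof -
  have "vinner (basis_vec j) y = infsum (\<lambda>i. cnj (basis_vec j i) * y i) {j}"
    unfolding vinner_def by (rule infsum_cong_neutral) (auto simp: basis_vec_def)
  then show ?thesis by (simp add: basis_vec_def)
qed

lemma vinner_basis_vec_right: "vinner x (basis_vec j) = cnj (x j)"
proof -
  have "vinner x (basis_vec j) = infsum (\<lambda>i. cnj (x i) * basis_vec j i) {j}"
    unfolding vinner_def by (rule infsum_cong_neutral) (auto simp: basis_vec_def)
  then show ?thesis by (simp add: basis_vec_def)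
qed

definition trunc_vec :: "nat \<Rightarrow> nat vec \<Rightarrow> nat vec" where
  "trunc_vec N x = (\<lambda>i. if i < N then x i else 0)"

lemma trunc_vec_0: "trunc_vec 0 x = vzero"
  by (simp add: trunc_vec_def vzero_def)

lemma trunc_vec_Suc: "trunc_vec (Suc N) x = (\<lambda>i. 1 * trunc_vec N x i + x N * basis_vec N i)"
  by (rule ext) (auto simp: trunc_vec_def basis_vec_def less_Suc_eq)

lemma trunc_vec_ell2: "trunc_vec N x \<in> ell2"
proof (induction N)
  case (Suc N)
  show ?case unfolding trunc_vec_Suc by (rule ell2_lin_comb[OF Suc basis_vec_ell2])
qed (simp add: trunc_vec_0)

lemma trunc_vec_tendsto:
  assumes "x \<in> ell2"
  shows "(\<lambda>N. vnorm (\<lambda>i. trunc_vec N x i - x i)) \<longlonglongrightarrow> 0"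
proof (rule LIMSEQ_I)
  fix r :: real assume r: "r > 0"
  obtain N where N: "\<And>B. B \<subseteq> {N..} \<Longrightarrow> infsum (\<lambda>i. (cmod (x i))^2) B \<le> r^2 / 2"
    using summable_on_tail_le_nat[of "\<lambda>i. (cmod (x i))^2" "r^2/2"] assms r
    unfolding mem_ell2_iff by auto
  have "norm (vnorm (\<lambda>i. trunc_vec M x i - x i) - 0) < r" if "M \<ge> N" for M
  proof -
    have "(\<lambda>i. trunc_vec M x i - x i) = (\<lambda>i. if i \<in> {M..} then - x i else 0)"
      by (auto simp: trunc_vec_def)
    then have "sqnorm (\<lambda>i. trunc_vec M x i - x i) = infsum (\<lambda>i. (cmod (- x i))^2) {M..}"
      by (simp only: sqnorm_restrict)
    also have "\<dots> < r^2"
    proof -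
      have "infsum (\<lambda>i. (cmod (x i))^2) {M..} \<le> r^2 / 2" using N that by simp
      moreover have "r^2 > 0" using r by simp
      ultimately show ?thesis unfolding norm_minus_cancel by linarith
    qed
    finally show ?thesis
      using r real_less_lsqrt[of r] by (simp add: vnorm_eq_sqrt_sqnorm sqnorm_nonneg)
  qed
  then show "\<exists>N. \<forall>M\<ge>N. norm (vnorm (\<lambda>i. trunc_vec M x i - x i) - 0) < r" by blast
qed

lemma closed_subspace_lin_comb:
  "closed_subspace H M \<Longrightarrow> x \<in> M \<Longrightarrow> y \<in> M \<Longrightarrow> (\<lambda>i. a * x i + b * y i) \<in> M"
  unfolding closed_subspace_def by blast

lemma closed_subspace_scale:
  "closed_subspace H M \<Longrightarrow> x \<in> M \<Longrightarrow> (\<lambda>i. a * x i) \<in> M"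
  using closed_subspace_lin_comb[of H M x x a 0] by simp

lemma closed_subspace_vzero: "closed_subspace H M \<Longrightarrow> vzero \<in> M"
  unfolding closed_subspace_def by blast

lemma closed_subspace_subset: "closed_subspace H M \<Longrightarrow> M \<subseteq> H"
  unfolding closed_subspace_def by blast

lemma closed_subspace_limit:
  "closed_subspace H M \<Longrightarrow> (\<And>k. s k \<in> M) \<Longrightarrow> x \<in> ell2 \<Longrightarrow>
    (\<lambda>k. vnorm (\<lambda>i. s k i - x i)) \<longlonglongrightarrow> 0 \<Longrightarrow> x \<in> M"
  unfolding closed_subspace_def by blast

lemma closed_subspace_sum:
  fixes K :: nat
  assumes M: "closed_subspace H M" and f: "\<And>k. k < K \<Longrightarrow> f k \<in> M"
  shows "(\<lambda>i. \<Sum>k<K. f k i) \<in> M"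
  using f
proof (induction K)
  case 0
  then show ?case using closed_subspace_vzero[OF M] by (simp add: vzero_def)
next
  case (Suc K)
  have "(\<lambda>i. \<Sum>k<K. f k i) \<in> M" using Suc by simp
  from closed_subspace_lin_comb[OF M this Suc.prems[of K], of 1 1] show ?case by simp
qed

lemma closed_subspace_ell2: "closed_subspace ell2 ell2"
  unfolding closed_subspace_def using ell2_lin_comb by auto

lemma closed_subspace_eq_ell2_if_basis:
  assumes M: "closed_subspace ell2 M" and basis: "\<And>m. basis_vec m \<in> M"
  shows "M = (ell2 :: nat vec set)"
proof
  show "M \<subseteq> ell2" by (rule closed_subspace_subset[OF M])
  show "ell2 \<subseteq> M"
  proof
    fix x :: "nat vec" assume x: "x \<in> ell2"
    have "trunc_vec N x \<in> M" for N
    proof (induction N)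
      case (Suc N)
      show ?case unfolding trunc_vec_Suc by (rule closed_subspace_lin_comb[OF M Suc basis])
    qed (simp add: trunc_vec_0 closed_subspace_vzero[OF M])
    then show "x \<in> M"
      by (rule closed_subspace_limit[OF M _ x trunc_vec_tendsto[OF x]])
  qed
qed

lemma bounded_op_maps: "bounded_op H T \<Longrightarrow> x \<in> H \<Longrightarrow> T x \<in> H"
  unfolding bounded_op_def by blast

lemma bounded_op_lin_comb:
  "bounded_op H T \<Longrightarrow> x \<in> H \<Longrightarrow> y \<in> H \<Longrightarrow>
    T (\<lambda>i. a * x i + b * y i) = (\<lambda>i. a * T x i + b * T y i)"
  unfolding bounded_op_def by blast

lemma bounded_op_scale:
  "bounded_op H T \<Longrightarrow> x \<in> H \<Longrightarrow> T (\<lambda>i. c * x i) = (\<lambda>i. c * T x i)"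
  using bounded_op_lin_comb[of H T x x c 0] by simp

lemma bounded_opE:
  assumes "bounded_op H T"
  obtains C where "\<And>x. x \<in> H \<Longrightarrow> vnorm (T x) \<le> C * vnorm x"
  using assms unfolding bounded_op_def by blast

lemma adjoint_op_ell2_eqI:
  assumes S: "bounded_op ell2 S" and adj: "\<And>x y. x \<in> ell2 \<Longrightarrow> y \<in> ell2 \<Longrightarrow> vinner (T x) y = vinner x (S y)"
    and y: "y \<in> ell2"
  shows "adjoint_op ell2 T y = S y"
proof
  let ?P = "\<lambda>S. bounded_op ell2 S \<and> (\<forall>x\<in>ell2. \<forall>y\<in>ell2. vinner (T x) y = vinner x (S y))"
  have "?P (adjoint_op ell2 T)"
    unfolding adjoint_op_def by (rule someI[of ?P S]) (use S adj in blast)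
  then have adj': "vinner (T x) y = vinner x (adjoint_op ell2 T y)" if "x \<in> ell2" for x
    using y that by blast
  fix j
  show "adjoint_op ell2 T y j = S y j"
    using adj'[of "basis_vec j"] adj[of "basis_vec j" y] y by (simp add: vinner_basis_vec_left)
qed

lemma infsum_finite_sum:
  fixes f :: "'k \<Rightarrow> 'a \<Rightarrow> 'b::{topological_comm_monoid_add,t2_space}"
  assumes "finite F" "\<And>k. k \<in> F \<Longrightarrow> f k summable_on A"
  shows "(\<lambda>i. \<Sum>k\<in>F. f k i) summable_on A \<and> infsum (\<lambda>i. \<Sum>k\<in>F. f k i) A = (\<Sum>k\<in>F. infsum (f k) A)"
  using assms
proof (induction F rule: finite_induct)
  case (insert k F)
  then have "f k summable_on A" and IH: "(\<lambda>i. \<Sum>k\<in>F. f k i) summable_on A"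
    "infsum (\<lambda>i. \<Sum>k\<in>F. f k i) A = (\<Sum>k\<in>F. infsum (f k) A)" by simp_all
  with insert.hyps show ?case
    by (simp add: summable_on_add infsum_add)
qed simp

lemma sqnorm_scale: "sqnorm (\<lambda>i. c * x i) = (cmod c)^2 * sqnorm x"
  unfolding sqnorm_def by (simp add: norm_mult power_mult_distrib infsum_cmult_right')

lemma sqnorm_sum_le:
  fixes K :: nat
  assumes f: "\<And>k. k < K \<Longrightarrow> f k \<in> ell2"
  shows "sqnorm (\<lambda>i. \<Sum>k<K. f k i) \<le> K * (\<Sum>k<K. sqnorm (f k))"
proof -
  have S: "(\<lambda>i. \<Sum>k<K. (cmod (f k i))^2) summable_on UNIV \<and>
      infsum (\<lambda>i. \<Sum>k<K. (cmod (f k i))^2) UNIV = (\<Sum>k<K. sqnorm (f k))"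
    unfolding sqnorm_def by (rule infsum_finite_sum) (use f in \<open>auto simp: mem_ell2_iff\<close>)
  have pointwise: "(cmod (\<Sum>k<K. f k i))^2 \<le> K * (\<Sum>k<K. (cmod (f k i))^2)" for i
  proof -
    have "(cmod (\<Sum>k<K. f k i))^2 \<le> (\<Sum>k<K. 1 * cmod (f k i))^2"
      by (simp add: power_mono norm_sum)
    also have "\<dots> \<le> (\<Sum>k<K. 1^2) * (\<Sum>k<K. (cmod (f k i))^2)"
      by (rule Cauchy_Schwarz_ineq_sum)
    finally show ?thesis by simp
  qed
  have "(\<lambda>i. \<Sum>k<K. f k i) \<in> ell2"
    by (rule closed_subspace_sum[OF closed_subspace_ell2 f])
  then have "sqnorm (\<lambda>i. \<Sum>k<K. f k i) \<le> infsum (\<lambda>i. K * (\<Sum>k<K. (cmod (f k i))^2)) UNIV"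
    unfolding sqnorm_def mem_ell2_iff
    by (rule infsum_mono) (use S pointwise in \<open>auto intro: summable_on_cmult_right\<close>)
  also have "\<dots> = K * (\<Sum>k<K. sqnorm (f k))"
    using S by (simp add: infsum_cmult_right')
  finally show ?thesis .
qed

lemma cmod_sum_power2_disjoint:
  fixes g :: "'k \<Rightarrow> complex"
  assumes "finite F" "\<And>k k'. k \<in> F \<Longrightarrow> k' \<in> F \<Longrightarrow> g k \<noteq> 0 \<Longrightarrow> g k' \<noteq> 0 \<Longrightarrow> k = k'"
  shows "(cmod (\<Sum>k\<in>F. g k))^2 = (\<Sum>k\<in>F. (cmod (g k))^2)"
proof (cases "\<exists>k0\<in>F. g k0 \<noteq> 0")
  case True
  then obtain k0 where k0: "k0 \<in> F" "g k0 \<noteq> 0" by blast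
  then have "\<And>k. k \<in> F - {k0} \<Longrightarrow> g k = 0" using assms(2) by blast
  then show ?thesis
    using sum.remove[OF assms(1) k0(1), of g] sum.remove[OF assms(1) k0(1), of "\<lambda>k. (cmod (g k))^2"]
    by simp
qed simp

lemma sqnorm_sum_disjoint:
  fixes K :: nat
  assumes f: "\<And>k. k < K \<Longrightarrow> f k \<in> ell2"
    and disj: "\<And>k k' i. k < K \<Longrightarrow> k' < K \<Longrightarrow> f k i \<noteq> 0 \<Longrightarrow> f k' i \<noteq> 0 \<Longrightarrow> k = k'"
  shows "sqnorm (\<lambda>i. \<Sum>k<K. f k i) = (\<Sum>k<K. sqnorm (f k))"
proof -
  have "sqnorm (\<lambda>i. \<Sum>k<K. f k i) = infsum (\<lambda>i. \<Sum>k<K. (cmod (f k i))^2) UNIV"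
    unfolding sqnorm_def using disj by (subst cmod_sum_power2_disjoint) auto
  also have "\<dots> = (\<Sum>k<K. sqnorm (f k))"
    unfolding sqnorm_def by (rule infsum_finite_sum[THEN conjunct2]) (use f in \<open>auto simp: mem_ell2_iff\<close>)
  finally show ?thesis .
qed

section \<open>Transport along injections\<close>

locale vec_transport =
  fixes g :: "'a \<Rightarrow> 'b" and A :: "'a set" and x :: "'a vec" and y :: "'b vec"
  assumes inj: "inj_on g A"
    and on_image: "\<And>a. a \<in> A \<Longrightarrow> y (g a) = x a"
    and off_image: "\<And>u. u \<notin> g ` A \<Longrightarrow> y u = 0"
    and off_dom: "\<And>a. a \<notin> A \<Longrightarrow> x a = 0"
begin

lemma
  assumes F0: "\<And>u. F 0 u = 0"
  shows infsum_transport: "infsum (\<lambda>u. F (y u) u) UNIV = infsum (\<lambda>a. F (x a) (g a)) UNIV"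
    and summable_on_transport:
      "(\<lambda>u. F (y u) u) summable_on UNIV \<longleftrightarrow> (\<lambda>a. F (x a) (g a)) summable_on UNIV"
proof -
  have off: "\<And>u. u \<in> UNIV - g ` A \<Longrightarrow> F (y u) u = 0"
    and dom: "\<And>a. a \<in> UNIV - A \<Longrightarrow> F (x a) (g a) = 0"
    using off_image off_dom F0 by auto
  have on: "((\<lambda>u. F (y u) u) \<circ> g) a = F (x a) (g a)" if "a \<in> A" for a
    using on_image that by simp
  have "infsum (\<lambda>u. F (y u) u) UNIV = infsum (\<lambda>u. F (y u) u) (g ` A)"
    by (rule infsum_cong_neutral) (use off in auto)
  also have "\<dots> = infsum ((\<lambda>u. F (y u) u) \<circ> g) A"
    by (rule infsum_reindex[OF inj])
  also have "\<dots> = infsum (\<lambda>a. F (x a) (g a)) UNIV"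
    by (rule infsum_cong_neutral) (use on dom in auto)
  finally show "infsum (\<lambda>u. F (y u) u) UNIV = infsum (\<lambda>a. F (x a) (g a)) UNIV" .
  have "(\<lambda>u. F (y u) u) summable_on UNIV \<longleftrightarrow> (\<lambda>u. F (y u) u) summable_on (g ` A)"
    by (rule summable_on_cong_neutral) (use off in auto)
  also have "\<dots> \<longleftrightarrow> ((\<lambda>u. F (y u) u) \<circ> g) summable_on A"
    by (rule summable_on_reindex[OF inj])
  also have "\<dots> \<longleftrightarrow> (\<lambda>a. F (x a) (g a)) summable_on UNIV"
    by (rule summable_on_cong_neutral) (use on dom in auto)
  finally show "(\<lambda>u. F (y u) u) summable_on UNIV \<longleftrightarrow> (\<lambda>a. F (x a) (g a)) summable_on UNIV" .
qed

lemma ell2_iff: "y \<in> ell2 \<longleftrightarrow> x \<in> ell2"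
  unfolding mem_ell2_iff by (rule summable_on_transport) simp

lemma sqnorm_eq: "sqnorm y = sqnorm x"
  unfolding sqnorm_def by (rule infsum_transport) simp

lemma vinner_eq: "vinner y z = vinner x (\<lambda>a. z (g a))"
  unfolding vinner_def by (rule infsum_transport) simp

end

lemma vec_transport_unique:
  assumes "vec_transport g A x y" "vec_transport g A x y'"
  shows "y = y'"
proof
  fix u
  show "y u = y' u"
    using vec_transport.on_image[OF assms(1)] vec_transport.on_image[OF assms(2)]
      vec_transport.off_image[OF assms(1)] vec_transport.off_image[OF assms(2)]
    by (cases "u \<in> g ` A") auto
qed

lemma vec_transport_comp:
  assumes gy: "vec_transport g A x y" and hz: "vec_transport h B y z" and sub: "g ` A \<subseteq> B"
  shows "vec_transport (h \<circ> g) A x z"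
proof
  show "inj_on (h \<circ> g) A"
    using vec_transport.inj[OF gy] vec_transport.inj[OF hz] sub by (rule comp_inj_on[OF _ inj_on_subset])
  show "z ((h \<circ> g) a) = x a" if "a \<in> A" for a
    using that sub vec_transport.on_image[OF gy] vec_transport.on_image[OF hz] by auto
  show "z u = 0" if "u \<notin> (h \<circ> g) ` A" for u
  proof (cases "u \<in> h ` B")
    case True
    then obtain b where "b \<in> B" "u = h b" by blast
    with that have "b \<notin> g ` A" by auto
    with \<open>b \<in> B\<close> \<open>u = h b\<close> show ?thesis
      using vec_transport.on_image[OF hz] vec_transport.off_image[OF gy] by simp
  qed (use vec_transport.off_image[OF hz] in blast)
qed (rule vec_transport.off_dom[OF gy])

section \<open>The Cuntz tuple\<close>

text \<open>Basis vectors are indexed from \<open>0\<close>: the paper's \<open>e\<^sub>l\<close> is \<open>basis_vec (l - 1)\<close>, and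
  \<open>cuntz n k\<close> maps \<open>basis_vec l\<close> to \<open>basis_vec (n * l + k - 1)\<close>.\<close>

definition cuntz :: "nat \<Rightarrow> nat \<Rightarrow> nat vec \<Rightarrow> nat vec" where
  "cuntz n k x = (\<lambda>m. if m mod n = k - 1 then x (m div n) else 0)"

definition cuntz_adj :: "nat \<Rightarrow> nat \<Rightarrow> nat vec \<Rightarrow> nat vec" where
  "cuntz_adj n k y = (\<lambda>l. y (n * l + (k - 1)))"

lemma vec_transport_cuntz:
  assumes n: "n > 0" and k: "k \<in> {1..n}"
  shows "vec_transport (\<lambda>l. n * l + (k - 1)) UNIV x (cuntz n k x)"
proof
  have "k - 1 < n" using k by auto
  then show "cuntz n k x (n * l + (k - 1)) = x l" for l
    using n by (simp add: cuntz_def)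
  show "cuntz n k x m = 0" if "m \<notin> range (\<lambda>l. n * l + (k - 1))" for m
  proof -
    have "m \<noteq> n * (m div n) + (k - 1)" using that by blast
    then have "m mod n \<noteq> k - 1" by (metis mult_div_mod_eq)
    then show ?thesis by (simp add: cuntz_def)
  qed
qed (use n in \<open>auto simp: inj_on_def\<close>)

lemma cuntz_lin_comb: "cuntz n k (\<lambda>i. a * x i + b * y i) = (\<lambda>i. a * cuntz n k x i + b * cuntz n k y i)"
  by (rule ext) (simp add: cuntz_def)

lemma cuntz_scale: "cuntz n k (\<lambda>i. c * x i) = (\<lambda>i. c * cuntz n k x i)"
  by (rule ext) (simp add: cuntz_def)

lemma
  assumes "n > 0" "k \<in> {1..n}"
  shows cuntz_ell2_iff: "cuntz n k x \<in> ell2 \<longleftrightarrow> x \<in> ell2"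
    and sqnorm_cuntz: "sqnorm (cuntz n k x) = sqnorm x"
    and vinner_cuntz: "vinner (cuntz n k x) y = vinner x (cuntz_adj n k y)"
  using vec_transport.ell2_iff vec_transport.sqnorm_eq vec_transport.vinner_eq
    vec_transport_cuntz[OF assms] by (fastforce simp: cuntz_adj_def)+

lemma bounded_op_cuntz:
  assumes "n > 0" "k \<in> {1..n}" shows "bounded_op ell2 (cuntz n k)"
  unfolding bounded_op_def
  by (intro conjI ballI allI exI[of _ 1])
     (simp_all add: cuntz_ell2_iff[OF assms] cuntz_lin_comb vnorm_eq_sqrt_sqnorm sqnorm_cuntz[OF assms])

lemma cuntz_adj_ell2:
  assumes "n > 0" "y \<in> ell2"
  shows "cuntz_adj n k y \<in> ell2" and "sqnorm (cuntz_adj n k y) \<le> sqnorm y"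
proof -
  let ?g = "\<lambda>l. n * l + (k - 1)"
  let ?f = "\<lambda>m. (cmod (y m))^2"
  have s: "?f summable_on UNIV" using assms(2) unfolding mem_ell2_iff .
  have inj: "inj ?g" using assms(1) by (auto simp: inj_on_def)
  have sr: "?f summable_on range ?g" by (rule summable_on_subset[OF s]) simp
  then have "(?f \<circ> ?g) summable_on UNIV" using summable_on_reindex[OF inj, of ?f] by simp
  then show "cuntz_adj n k y \<in> ell2"
    unfolding mem_ell2_iff cuntz_adj_def by (simp add: o_def)
  have "sqnorm (cuntz_adj n k y) = infsum ?f (range ?g)"
    unfolding sqnorm_def cuntz_adj_def using infsum_reindex[OF inj, of ?f] by (simp add: o_def)
  also have "\<dots> \<le> sqnorm y"
    unfolding sqnorm_def by (rule infsum_mono2[OF sr s]) auto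
  finally show "sqnorm (cuntz_adj n k y) \<le> sqnorm y" .
qed

lemma bounded_op_cuntz_adj:
  assumes "n > 0" shows "bounded_op ell2 (cuntz_adj n k)"
  unfolding bounded_op_def
  by (intro conjI ballI allI exI[of _ 1])
     (use cuntz_adj_ell2[OF assms] in \<open>auto simp: cuntz_adj_def vnorm_eq_sqrt_sqnorm\<close>)

lemma adjoint_cuntz:
  assumes "n > 0" "k \<in> {1..n}" "y \<in> ell2"
  shows "adjoint_op ell2 (cuntz n k) y = cuntz_adj n k y"
  by (rule adjoint_op_ell2_eqI[OF bounded_op_cuntz_adj[OF assms(1)] vinner_cuntz[OF assms(1,2)] assms(3)])

lemma cuntz_adj_cuntz:
  assumes "n > 0" "i \<in> {1..n}" "j \<in> {1..n}"
  shows "cuntz_adj n i (cuntz n j x) = (if i = j then x else vzero)"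
proof (rule ext)
  fix l
  have "i - 1 < n" using assms by auto
  then have "(n * l + (i - 1)) mod n = i - 1" "(n * l + (i - 1)) div n = l" using assms(1) by auto
  moreover have "i - 1 = j - 1 \<longleftrightarrow> i = j" using assms by auto
  ultimately show "cuntz_adj n i (cuntz n j x) l = (if i = j then x else vzero) l"
    by (auto simp: cuntz_adj_def cuntz_def vzero_def)
qed

definition dilate :: "nat \<Rightarrow> nat vec \<Rightarrow> nat vec" where
  "dilate d x = (\<lambda>m. if m mod d = 0 then x (m div d) else 0)"

lemma cuntz_1_eq_dilate: "cuntz n 1 = dilate n"
  by (intro ext) (simp add: cuntz_def dilate_def)

lemma dilate_dilate:
  assumes "a > 0" "b > 0"
  shows "dilate a (dilate b x) = dilate (a * b) x"
proof (rule ext)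
  fix m
  have "m mod (a * b) = 0 \<longleftrightarrow> m mod a = 0 \<and> (m div a) mod b = 0"
    by (metis assms(1) dvd_div_iff_mult dvd_eq_mod_eq_0 dvd_mult_right mult.commute
        nonzero_mult_div_cancel_left not_gr0 dvd_mult_div_cancel)
  then show "dilate a (dilate b x) m = dilate (a * b) x m"
    by (simp add: dilate_def div_mult2_eq)
qed

lemma vec_transport_dilate: "d > 0 \<Longrightarrow> vec_transport (\<lambda>l. d * l) UNIV x (dilate d x)"
  by unfold_locales (auto simp: dilate_def inj_on_def elim!: dvdE[OF mod_0_imp_dvd])

lemma
  assumes "d > 0"
  shows dilate_ell2_iff: "dilate d x \<in> ell2 \<longleftrightarrow> x \<in> ell2"
    and sqnorm_dilate: "sqnorm (dilate d x) = sqnorm x"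
  using vec_transport.ell2_iff vec_transport.sqnorm_eq vec_transport_dilate[OF assms] by blast+

lemma dilate_basis_vec_0: "d > 0 \<Longrightarrow> dilate d (basis_vec 0) = basis_vec 0"
  using div_mult_mod_eq[of _ d] by (fastforce simp: dilate_def basis_vec_def)

lemma isometric_tuple_cuntz:
  assumes "n > 0" shows "isometric_tuple ell2 n (cuntz n)"
  unfolding isometric_tuple_def
  using bounded_op_cuntz[OF assms] adjoint_cuntz[OF assms] cuntz_adj_cuntz[OF assms]
    cuntz_ell2_iff[OF assms] by simp

section \<open>Irreducibility\<close>

lemma cuntz_basis_vec:
  assumes "n > 0" shows "cuntz n (m mod n + 1) (basis_vec (m div n)) = basis_vec m"
proof (rule ext)
  fix i
  have "i mod n = m mod n \<and> i div n = m div n \<longleftrightarrow> i = m"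
    using div_mult_mod_eq[of i n] div_mult_mod_eq[of m n] by metis
  then show "cuntz n (m mod n + 1) (basis_vec (m div n)) i = basis_vec m i"
    by (auto simp: cuntz_def basis_vec_def)
qed

lemma mod_Suc_mem_atLeastAtMost: "(n::nat) > 0 \<Longrightarrow> m mod n + 1 \<in> {1..n}"
  using mod_less_divisor[of n m] by (simp add: Suc_le_eq)

lemma basis_vec_cuntz_induct:
  assumes n: "n \<ge> 2" and zero: "P (basis_vec 0)"
    and step: "\<And>k j. k \<in> {1..n} \<Longrightarrow> P (basis_vec j) \<Longrightarrow> P (cuntz n k (basis_vec j))"
  shows "P (basis_vec m)"
proof (induction m rule: less_induct)
  case (less m)
  show ?case
  proof (cases "m = 0")
    case False
    then have "m div n < m" using n by (intro div_less_dividend) auto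
    moreover have "m mod n + 1 \<in> {1..n}" using n by (intro mod_Suc_mem_atLeastAtMost) simp
    ultimately show ?thesis
      using step less.IH cuntz_basis_vec[of n m] n by fastforce
  qed (use zero in simp)
qed

lemma dilate_fixed_point:
  assumes d: "d \<ge> 2" and f: "dilate d f = f" and m: "m \<ge> 1"
  shows "f m = 0"
  using m
proof (induction m rule: less_induct)
  case (less m)
  have "f m = (if m mod d = 0 then f (m div d) else 0)"
    by (subst f[symmetric]) (simp add: dilate_def)
  also have "\<dots> = 0"
  proof (cases "m mod d = 0")
    case True
    then have "m div d \<noteq> 0" using less.prems by (metis div_mult_mod_eq mult_0 add_0 not_one_le_zero)
    moreover have "m div d < m" using less.prems d by (intro div_less_dividend) auto
    ultimately show ?thesis using less.IH True by simp
  qed simp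
  finally show ?case .
qed

lemma bounded_op_trunc_vec_tendsto:
  fixes x :: "nat vec"
  assumes A: "bounded_op ell2 A" and x: "x \<in> ell2"
  shows "(\<lambda>N. A (trunc_vec N x) j) \<longlonglongrightarrow> A x j"
proof -
  obtain C where C: "\<And>x. x \<in> ell2 \<Longrightarrow> vnorm (A x) \<le> C * vnorm x"
    using bounded_opE[OF A] by blast
  define r where "r N = (\<lambda>i. x i - trunc_vec N x i)" for N
  have r: "r N \<in> ell2" for N
    unfolding r_def using ell2_lin_comb[OF x trunc_vec_ell2, of 1 "-1"] by simp
  have bound: "norm (A (trunc_vec N x) j - A x j) \<le> C * vnorm (r N)" for N
  proof -
    have "x = (\<lambda>i. 1 * trunc_vec N x i + 1 * r N i)" by (simp add: r_def)
    then have "A x = (\<lambda>i. 1 * A (trunc_vec N x) i + 1 * A (r N) i)"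
      by (metis bounded_op_lin_comb[OF A trunc_vec_ell2 r])
    then have "norm (A (trunc_vec N x) j - A x j) = cmod (A (r N) j)"
      by (simp add: norm_minus_commute)
    also have "\<dots> \<le> C * vnorm (r N)"
      using cmod_le_vnorm[OF bounded_op_maps[OF A r[of N]], of j] C[OF r[of N]] by linarith
    finally show ?thesis .
  qed
  have "vnorm (r N) = vnorm (\<lambda>i. trunc_vec N x i - x i)" for N
    unfolding r_def vnorm_def by (simp add: norm_minus_commute)
  then have "(\<lambda>N. C * vnorm (r N)) \<longlonglongrightarrow> 0"
    using tendsto_mult_right_zero[OF trunc_vec_tendsto[OF x], of C] by simp
  from Lim_null_comparison[OF always_eventually[OF allI[OF bound]] this]
  show ?thesis by (rule LIM_zero_cancel)
qed

lemma bounded_op_eq_scale_if_basis: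
  fixes x :: "nat vec"
  assumes A: "bounded_op ell2 A" and basis: "\<And>m. A (basis_vec m) = (\<lambda>i. c * basis_vec m i)"
    and x: "x \<in> ell2"
  shows "A x = (\<lambda>i. c * x i)"
proof (rule ext)
  fix j
  have trunc: "A (trunc_vec N x) = (\<lambda>i. c * trunc_vec N x i)" for N
  proof (induction N)
    case 0
    show ?case using bounded_op_scale[OF A vzero_ell2, of 0] by (simp add: trunc_vec_0 vzero_def)
  next
    case (Suc N)
    show ?case
      unfolding trunc_vec_Suc bounded_op_lin_comb[OF A trunc_vec_ell2 basis_vec_ell2] Suc basis
      by (simp add: algebra_simps)
  qed
  have "eventually (\<lambda>N. A (trunc_vec N x) j = c * x j) sequentially"
    using eventually_gt_at_top[of j] by eventually_elim (simp only: trunc, simp add: trunc_vec_def)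
  then have "(\<lambda>N. A (trunc_vec N x) j) \<longlonglongrightarrow> c * x j"
    by (rule tendsto_eventually)
  with bounded_op_trunc_vec_tendsto[OF A x] show "A x j = c * x j"
    by (rule LIMSEQ_unique)
qed

lemma commuting_cuntz_imp_scalar:
  assumes n: "n \<ge> 2" and A: "bounded_op ell2 A"
    and comm: "\<And>k x. k \<in> {1..n} \<Longrightarrow> x \<in> ell2 \<Longrightarrow> A (cuntz n k x) = cuntz n k (A x)"
  obtains c where "\<And>x. x \<in> ell2 \<Longrightarrow> A x = (\<lambda>i. c * x i)"
proof -
  have n0: "n > 0" using n by simp
  define c where "c = A (basis_vec 0) 0"
  have "dilate n (A (basis_vec 0)) = A (basis_vec 0)"
    using comm[of 1 "basis_vec 0", unfolded cuntz_1_eq_dilate] n by (simp add: dilate_basis_vec_0)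
  then have "A (basis_vec 0) i = 0" if "i \<ge> 1" for i
    using dilate_fixed_point[OF n _ that] by blast
  then have "A (basis_vec 0) = (\<lambda>i. c * basis_vec 0 i)"
    by (auto simp: c_def basis_vec_def)
  then have "A (basis_vec m) = (\<lambda>i. c * basis_vec m i)" for m
    by (rule basis_vec_cuntz_induct[OF n]) (simp add: comm cuntz_scale)
  then show ?thesis using bounded_op_eq_scale_if_basis[OF A] that by blast
qed

lemma wstar_alg_cuntz:
  assumes n: "n \<ge> 2"
  shows "wstar_alg ell2 n (cuntz n) = {T. bounded_op ell2 T}"
proof
  show "wstar_alg ell2 n (cuntz n) \<subseteq> {T. bounded_op ell2 T}"
    unfolding wstar_alg_def commutant_def by blast
  show "{T. bounded_op ell2 T} \<subseteq> wstar_alg ell2 n (cuntz n)"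
  proof
    fix T :: "(nat, nat) op" assume T: "T \<in> {T. bounded_op ell2 T}"
    have "T (A x) = A (T x)"
      if A: "A \<in> commutant ell2 (cuntz n ` {1..n} \<union> adjoint_op ell2 ` cuntz n ` {1..n})"
        and x: "x \<in> ell2" for A x
    proof -
      have "bounded_op ell2 A" and "\<And>k y. k \<in> {1..n} \<Longrightarrow> y \<in> ell2 \<Longrightarrow> A (cuntz n k y) = cuntz n k (A y)"
        using A unfolding commutant_def by auto
      then obtain c where "\<And>y. y \<in> ell2 \<Longrightarrow> A y = (\<lambda>i. c * y i)"
        using commuting_cuntz_imp_scalar[OF n] by metis
      then show ?thesis using T x bounded_op_maps bounded_op_scale by fastforce
    qed
    then show "T \<in> wstar_alg ell2 n (cuntz n)"
      using T unfolding wstar_alg_def commutant_def by blast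
  qed
qed

section \<open>Reducing subspaces are trivial\<close>

lemma word_op_cuntz_replicate_1:
  assumes "n > 0"
  shows "word_op (cuntz n) (replicate s 1) x = dilate (n^s) x"
proof (induction s arbitrary: x)
  case (Suc s)
  have "word_op (cuntz n) (replicate (Suc s) 1) x = cuntz n 1 (word_op (cuntz n) (replicate s 1) x)"
    by (simp add: word_op_def)
  also have "\<dots> = dilate n (dilate (n^s) x)"
    by (simp only: Suc.IH cuntz_1_eq_dilate)
  finally show ?case
    using assms by (simp add: dilate_dilate)
qed (simp add: word_op_def dilate_def)

lemma invariant_sub_dilate_power:
  assumes M: "invariant_sub ell2 n (cuntz n) M" and n: "n > 0" and x: "x \<in> M"
  shows "dilate (n^s) x \<in> M"
proof -
  have "1 \<in> {1..n}" using n by simp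
  then have "word_op (cuntz n) (replicate s 1) x \<in> M"
    using M x by (induction s) (auto simp: word_op_def invariant_sub_def)
  then show ?thesis by (simp only: word_op_cuntz_replicate_1[OF n])
qed

lemma dilate_power_supports_disjoint:
  fixes y :: "nat vec"
  assumes n: "n \<ge> 2" and supp: "\<And>j. y j \<noteq> 0 \<Longrightarrow> 1 \<le> j \<and> j < N"
    and "dilate (n^(k*N)) y i \<noteq> 0" and "dilate (n^(k'*N)) y i \<noteq> 0"
  shows "k = k'"
proof -
  have gen: "\<exists>q. 1 \<le> q \<and> q < N \<and> i = q * n^(s*N)" if "dilate (n^(s*N)) y i \<noteq> 0" for s
  proof (intro exI conjI)
    have "i mod n^(s*N) = 0" and y: "y (i div n^(s*N)) \<noteq> 0"
      using that by (auto simp: dilate_def split: if_splits)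
    then show "i = i div n^(s*N) * n^(s*N)" using div_mult_mod_eq[of i "n^(s*N)"] by simp
    show "1 \<le> i div n^(s*N)" "i div n^(s*N) < N" using supp[OF y] by auto
  qed
  have no_gap: False if "k1 < k2" "i = q1 * n^(k1*N)" "i = q2 * n^(k2*N)" "1 \<le> q2" "q1 < N"
    for k1 k2 q1 q2
  proof -
    have "n^(k2*N) = n^(k1*N) * n^((k2-k1)*N)"
      using that(1) by (simp add: power_add[symmetric] algebra_simps)
    then have "q1 = q2 * n^((k2-k1)*N)" using that(2,3) n by simp
    moreover have "N < n^((k2-k1)*N)"
    proof -
      have "N < 2^N" by (rule less_exp)
      also have "\<dots> \<le> n^N" using n by (simp add: power_mono)
      also have "\<dots> \<le> n^((k2-k1)*N)" using n that(1) by (intro power_increasing) auto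
      finally show ?thesis .
    qed
    moreover have "n^((k2-k1)*N) \<le> q2 * n^((k2-k1)*N)" using that(4) by simp
    ultimately show False using that(5) by linarith
  qed
  obtain q where q: "1 \<le> q" "q < N" "i = q * n^(k*N)" using gen[OF assms(3)] by blast
  obtain q' where q': "1 \<le> q'" "q' < N" "i = q' * n^(k'*N)" using gen[OF assms(4)] by blast
  show ?thesis
    using no_gap[of k k' q q'] no_gap[of k' k q' q] q q' by (cases k k' rule: linorder_cases) auto
qed

lemma sqnorm_dilate_power_average_le:
  fixes K :: nat
  assumes "n > 0" "y \<in> ell2"
  shows "sqnorm (\<lambda>i. c * (\<Sum>k<K. dilate (n^(s k)) y i)) \<le> (cmod c)^2 * K^2 * sqnorm y"
proof -
  have "sqnorm (\<lambda>i. \<Sum>k<K. dilate (n^(s k)) y i) \<le> K * (\<Sum>k<K. sqnorm (dilate (n^(s k)) y))"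
    by (rule sqnorm_sum_le) (simp add: dilate_ell2_iff assms)
  then have "sqnorm (\<lambda>i. \<Sum>k<K. dilate (n^(s k)) y i) \<le> K^2 * sqnorm y"
    by (simp add: sqnorm_dilate assms power2_eq_square)
  then show ?thesis
    unfolding sqnorm_scale mult.assoc by (rule mult_left_mono) simp
qed

lemma sqnorm_dilate_power_average_disjoint:
  fixes K :: nat
  assumes n: "n \<ge> 2" and y: "y \<in> ell2" and supp: "\<And>j. y j \<noteq> 0 \<Longrightarrow> 1 \<le> j \<and> j < N"
  shows "sqnorm (\<lambda>i. c * (\<Sum>k<K. dilate (n^(k*N)) y i)) = (cmod c)^2 * K * sqnorm y"
proof -
  have "sqnorm (\<lambda>i. \<Sum>k<K. dilate (n^(k*N)) y i) = (\<Sum>k<K. sqnorm (dilate (n^(k*N)) y))"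
  proof (rule sqnorm_sum_disjoint)
    show "dilate (n^(k*N)) y \<in> ell2" for k
      using n y by (simp add: dilate_ell2_iff)
    show "k = k'" if "dilate (n^(k*N)) y i \<noteq> 0" "dilate (n^(k'*N)) y i \<noteq> 0" for k k' i
      using dilate_power_supports_disjoint[OF n supp that] .
  qed
  then show ?thesis
    using n by (simp add: sqnorm_scale sqnorm_dilate)
qed

text \<open>Split \<open>x = x\<^sub>0 e\<^sub>0 + x\<^sub>F + r\<close> with \<open>x\<^sub>F\<close> supported in \<open>[1, N)\<close> and \<open>r\<close> in \<open>[N, \<infinity>)\<close>.
  The dilates of \<open>x\<^sub>F\<close> have disjoint supports, so their average has squared norm
  \<open>\<parallel>x\<^sub>F\<parallel>\<^sup>2 / K\<close>; the average of the dilates of \<open>r\<close> is no larger than \<open>r\<close>.\<close>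

lemma sqnorm_dilate_power_average_sub_le:
  fixes x :: "nat vec" and K N :: nat
  assumes n: "n \<ge> 2" and x: "x \<in> ell2" and K: "K > 0" and N: "N \<ge> 1"
  shows "sqnorm (\<lambda>i. 1 / of_nat K * (\<Sum>k<K. dilate (n^(k*N)) x i) - x 0 * basis_vec 0 i)
    \<le> 2 * (sqnorm x / K) + 2 * infsum (\<lambda>i. (cmod (x i))^2) {N..}"
proof -
  define c :: complex where "c = 1 / of_nat K"
  have c: "(cmod c)^2 * K = 1 / K" "(cmod c)^2 * K^2 = 1"
    using K by (simp_all add: c_def norm_divide power2_eq_square)
  define xF where "xF = (\<lambda>i. if 1 \<le> i \<and> i < N then x i else 0)"
  define r where "r = (\<lambda>i. if i \<in> {N..} then x i else 0)"
  define U where "U = (\<lambda>i. c * (\<Sum>k<K. dilate (n^(k*N)) xF i))"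
  define R where "R = (\<lambda>i. c * (\<Sum>k<K. dilate (n^(k*N)) r i))"
  have "x = (\<lambda>j. x 0 * basis_vec 0 j + xF j + r j)"
    using N by (auto simp: xF_def r_def basis_vec_def Suc_le_eq)
  then have "dilate d x i = x 0 * basis_vec 0 i + dilate d xF i + dilate d r i" if "d > 0" for d i
    using dilate_basis_vec_0[OF that] by (metis (no_types, lifting) dilate_def add_0 mult_zero_right)
  then have diff: "(\<lambda>i. c * (\<Sum>k<K. dilate (n^(k*N)) x i) - x 0 * basis_vec 0 i) = (\<lambda>i. U i + R i)"
    using n K by (auto simp: U_def R_def c_def sum.distrib distrib_left)
  have xF: "xF \<in> ell2" and r: "r \<in> ell2"
    unfolding xF_def r_def by (rule ell2_restrict[OF x])+
  have "\<And>j. xF j \<noteq> 0 \<Longrightarrow> 1 \<le> j \<and> j < N"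
    by (simp add: xF_def split: if_splits)
  then have "sqnorm U = sqnorm xF / K"
    unfolding U_def using sqnorm_dilate_power_average_disjoint[OF n xF, of N c K] c by simp
  also have "\<dots> \<le> sqnorm x / K"
    unfolding xF_def by (rule divide_right_mono[OF sqnorm_restrict_le[OF x]]) simp
  finally have U: "sqnorm U \<le> sqnorm x / K" .
  have "sqnorm R \<le> sqnorm r"
    unfolding R_def using sqnorm_dilate_power_average_le[OF _ r, where s="\<lambda>k. k*N" and c=c and K=K] n c
    by simp
  then have R: "sqnorm R \<le> infsum (\<lambda>i. (cmod (x i))^2) {N..}"
    unfolding r_def sqnorm_restrict .
  have "U \<in> ell2" "R \<in> ell2"
    unfolding U_def R_def using n xF r
    by (auto intro!: closed_subspace_scale[OF closed_subspace_ell2] closed_subspace_sum[OF closed_subspace_ell2]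
        simp: dilate_ell2_iff)
  from sqnorm_add_le[OF this] U R show ?thesis
    unfolding c_def[symmetric] diff by linarith
qed

lemma dilate_power_average_approx:
  fixes x :: "nat vec"
  assumes n: "n \<ge> 2" and x: "x \<in> ell2" and e: "e > 0"
  obtains K N :: nat
  where "sqnorm (\<lambda>i. 1 / of_nat K * (\<Sum>k<K. dilate (n^(k*N)) x i) - x 0 * basis_vec 0 i) \<le> e"
proof -
  obtain N where N: "\<And>B. B \<subseteq> {N..} \<Longrightarrow> infsum (\<lambda>i. (cmod (x i))^2) B \<le> e/4"
    using summable_on_tail_le_nat[of "\<lambda>i. (cmod (x i))^2" "e/4"] x e unfolding mem_ell2_iff by auto
  obtain K :: nat where K: "real K > 4 * sqnorm x / e"
    using reals_Archimedean2 by blast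
  moreover have "4 * sqnorm x / e \<ge> 0" using sqnorm_nonneg[of x] e by simp
  ultimately have K0: "K > 0" by linarith
  have "sqnorm x / K \<le> e/4"
    using K K0 e by (simp add: field_simps)
  moreover have "infsum (\<lambda>i. (cmod (x i))^2) {Suc N..} \<le> e/4"
    by (rule N) auto
  ultimately show ?thesis
    using sqnorm_dilate_power_average_sub_le[OF n x K0, of "Suc N"] by (intro that[of K "Suc N"]) linarith
qed

lemma invariant_sub_eq_ell2_if_basis_vec_0:
  assumes n: "n \<ge> 2" and M: "invariant_sub ell2 n (cuntz n) M" and e0: "basis_vec 0 \<in> M"
  shows "M = ell2"
proof (rule closed_subspace_eq_ell2_if_basis)
  show "closed_subspace ell2 M" using M unfolding invariant_sub_def by blast
  show "basis_vec m \<in> M" for m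
    by (rule basis_vec_cuntz_induct[where P="\<lambda>v. v \<in> M", OF n e0]) (use M in \<open>auto simp: invariant_sub_def\<close>)
qed

lemma basis_vec_0_mem_invariant_sub:
  assumes n: "n \<ge> 2" and M: "invariant_sub ell2 n (cuntz n) M" and x: "x \<in> M" and x0: "x 0 \<noteq> 0"
  shows "basis_vec 0 \<in> M"
proof -
  have Mc: "closed_subspace ell2 M" using M unfolding invariant_sub_def by blast
  have xe: "x \<in> ell2" using closed_subspace_subset[OF Mc] x by blast
  define y :: "nat vec" where "y = (\<lambda>i. x 0 * basis_vec 0 i)"
  have "\<exists>a\<in>M. sqnorm (\<lambda>i. a i - y i) \<le> inverse (real (Suc j))" for j
  proof -
    obtain K N :: nat
      where "sqnorm (\<lambda>i. 1 / of_nat K * (\<Sum>k<K. dilate (n^(k*N)) x i) - y i) \<le> inverse (real (Suc j))"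
      using dilate_power_average_approx[OF n xe, of "inverse (real (Suc j))"] unfolding y_def by auto
    moreover have "(\<lambda>i. 1 / of_nat K * (\<Sum>k<K. dilate (n^(k*N)) x i)) \<in> M"
      using n by (intro closed_subspace_scale[OF Mc] closed_subspace_sum[OF Mc]
          invariant_sub_dilate_power[OF M _ x]) auto
    ultimately show ?thesis
      by (intro bexI[where x="\<lambda>i. 1 / of_nat K * (\<Sum>k<K. dilate (n^(k*N)) x i)"])
  qed
  then obtain s where s: "\<And>j. s j \<in> M" "\<And>j. sqnorm (\<lambda>i. s j i - y i) \<le> inverse (real (Suc j))"
    by metis
  have "(\<lambda>j. vnorm (\<lambda>i. s j i - y i)) \<longlonglongrightarrow> 0"
  proof (rule real_tendsto_sandwich[OF _ _ tendsto_const])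
    show "(\<lambda>j. sqrt (inverse (real (Suc j)))) \<longlonglongrightarrow> 0"
      using tendsto_real_sqrt[OF LIMSEQ_inverse_real_of_nat] by simp
  qed (use s(2) in \<open>auto simp: vnorm_eq_sqrt_sqnorm sqnorm_nonneg\<close>)
  moreover have "y \<in> ell2" unfolding y_def using ell2_lin_comb[of "basis_vec 0" "basis_vec 0" "x 0" 0] by simp
  ultimately have "y \<in> M" by (intro closed_subspace_limit[OF Mc s(1)])
  moreover have "(\<lambda>i. inverse (x 0) * y i) = basis_vec 0"
    using x0 by (simp add: y_def mult.assoc[symmetric])
  ultimately show ?thesis using closed_subspace_scale[OF Mc] by metis
qed

lemma reducing_sub_cuntz_eq_ell2:
  assumes n: "n \<ge> 2" and R: "reducing_sub ell2 n (cuntz n) M" and ne: "M \<noteq> {vzero}"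
  shows "M = ell2"
proof (cases "\<exists>x\<in>M. x 0 \<noteq> 0")
  case True
  have M: "invariant_sub ell2 n (cuntz n) M" using R unfolding reducing_sub_def by blast
  with True show ?thesis
    using invariant_sub_eq_ell2_if_basis_vec_0[OF n] basis_vec_0_mem_invariant_sub[OF n] by blast
next
  case False
  have Mc: "closed_subspace ell2 M" using R unfolding reducing_sub_def invariant_sub_def by blast
  have "basis_vec 0 \<in> ortho_compl ell2 M"
    using False unfolding ortho_compl_def by (simp add: vinner_basis_vec_right)
  then have "ortho_compl ell2 M = ell2"
    using invariant_sub_eq_ell2_if_basis_vec_0[OF n] R unfolding reducing_sub_def by blast
  then have "vinner x x = 0" if "x \<in> M" for x
    using that closed_subspace_subset[OF Mc] unfolding ortho_compl_def by blast
  then have "M \<subseteq> {vzero}"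
    using closed_subspace_subset[OF Mc] sqnorm_eq_0_imp_vzero by (auto simp: vinner_self)
  then show ?thesis using ne closed_subspace_vzero[OF Mc] by blast
qed

section \<open>The tuple is not absolutely continuous\<close>

definition L1_pow :: "nat \<Rightarrow> (nat list, nat list) op" where
  "L1_pow k x = (\<lambda>u. if k \<le> length u \<and> take k u = replicate k 1 then x (drop k u) else 0)"

lemma word_op_Lcre_replicate_1: "word_op Lcre (replicate k 1) = L1_pow k"
proof (induction k)
  case 0
  show ?case by (rule ext) (simp add: word_op_def L1_pow_def)
next
  case (Suc k)
  show ?case
  proof (intro ext)
    fix x u
    have "word_op Lcre (replicate (Suc k) 1) x = Lcre 1 (L1_pow k x)"
      using Suc.IH by (simp add: word_op_def)
    then show "word_op Lcre (replicate (Suc k) 1) x u = L1_pow (Suc k) x u"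
      by (cases u) (auto simp: Lcre_def L1_pow_def)
  qed
qed

lemma vec_transport_L1_pow: "vec_transport (\<lambda>w. replicate k 1 @ w) UNIV x (L1_pow k x)"
proof
  show "L1_pow k x u = 0" if "u \<notin> range (\<lambda>w. replicate k 1 @ w)" for u
  proof (rule ccontr)
    assume "L1_pow k x u \<noteq> 0"
    then have "k \<le> length u" "take k u = replicate k 1"
      by (auto simp: L1_pow_def split: if_splits)
    then have "u = replicate k 1 @ drop k u"
      by (metis append_take_drop_id)
    with that show False by blast
  qed
qed (auto simp: L1_pow_def inj_on_def)

lemma
  shows L1_pow_ell2_iff: "L1_pow k x \<in> ell2 \<longleftrightarrow> x \<in> ell2"
    and sqnorm_L1_pow: "sqnorm (L1_pow k x) = sqnorm x"
  using vec_transport.ell2_iff vec_transport.sqnorm_eq vec_transport_L1_pow by blast+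

lemma fock_ell2: "x \<in> fock n \<Longrightarrow> x \<in> ell2"
  unfolding fock_def by blast

lemma vzero_fock [simp]: "vzero \<in> fock n"
  unfolding fock_def using vzero_ell2 by (auto simp: vzero_def)

lemma words_Cons: "i # w \<in> words n \<longleftrightarrow> i \<in> {1..n} \<and> w \<in> words n"
  by (auto simp: words_def)

lemma L1_pow_fock:
  assumes "n \<ge> 1" "x \<in> fock n" shows "L1_pow k x \<in> fock n"
  unfolding fock_def
proof (intro CollectI conjI allI impI)
  show "L1_pow k x \<in> ell2" using assms(2) by (simp add: L1_pow_ell2_iff fock_ell2)
  fix u assume "L1_pow k x u \<noteq> 0"
  then have "take k u = replicate k 1" "x (drop k u) \<noteq> 0"
    by (auto simp: L1_pow_def split: if_splits)
  then have "set (take k u) \<subseteq> {1..n}" "drop k u \<in> words n"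
    using assms unfolding fock_def by (auto simp: set_replicate_conv_if)
  moreover have "set u = set (take k u) \<union> set (drop k u)"
    by (metis append_take_drop_id set_append)
  ultimately show "u \<in> words n"
    unfolding words_def by auto
qed

lemma bounded_op_L1_pow:
  assumes "n \<ge> 1" shows "bounded_op (fock n) (L1_pow k)"
  unfolding bounded_op_def
proof (intro conjI ballI allI exI[of _ 1])
  show "L1_pow k (\<lambda>i. a * x i + b * y i) = (\<lambda>i. a * L1_pow k x i + b * L1_pow k y i)" for x y a b
    by (rule ext) (simp add: L1_pow_def)
qed (simp_all add: L1_pow_fock[OF assms] vnorm_eq_sqrt_sqnorm sqnorm_L1_pow)

definition zero_op :: "('a, 'a) op" where
  "zero_op = (\<lambda>x u. 0)"

lemma topspace_wot_fock: "topspace (wot (fock n)) = UNIV"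
proof -
  have "UNIV \<in> {{T. vinner (T x) y \<in> U} | x y U. x \<in> fock n \<and> y \<in> fock n \<and> open U}"
    by (intro CollectI exI[of _ vzero] exI[of _ UNIV]) auto
  then show ?thesis unfolding wot_def by auto
qed

lemma mem_Ln_if_poly_ops: "bounded_op (fock n) T \<Longrightarrow> T \<in> poly_ops n \<Longrightarrow> T \<in> Ln n"
  unfolding Ln_def using closure_of_subset[of "poly_ops n" "wot (fock n)"] topspace_wot_fock by auto

lemma L1_pow_mem_Ln:
  assumes "n \<ge> 1" shows "L1_pow k \<in> Ln n"
proof (rule mem_Ln_if_poly_ops[OF bounded_op_L1_pow[OF assms]])
  have "replicate k 1 \<in> words n" using assms by (auto simp: words_def set_replicate_conv_if)
  then show "L1_pow k \<in> poly_ops n"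
    unfolding poly_ops_def
    by (intro CollectI exI[of _ "{replicate k 1}"] exI[of _ "\<lambda>_. 1"])
       (use word_op_Lcre_replicate_1[of k, unfolded One_nat_def] in simp)
qed

lemma zero_op_mem_Ln: "zero_op \<in> Ln n"
proof (rule mem_Ln_if_poly_ops)
  show "bounded_op (fock n) zero_op"
    unfolding bounded_op_def zero_op_def
  proof (intro conjI ballI allI exI[of _ 0])
    show "(\<lambda>u. 0) \<in> fock n" using vzero_fock[of n] by (simp add: vzero_def)
    show "vnorm (\<lambda>u. 0 :: complex) \<le> 0 * vnorm x" for x :: "nat list vec"
      by (simp add: vnorm_def)
  qed simp
  show "zero_op \<in> poly_ops n"
    unfolding poly_ops_def by (intro CollectI exI[of _ "{}"] exI[of _ "\<lambda>_. 1"]) (simp add: zero_op_def)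
qed

lemma limitin_topology_generated_by:
  assumes "l \<in> \<Union>S" "\<And>s. s \<in> S \<Longrightarrow> l \<in> s \<Longrightarrow> eventually (\<lambda>x. f x \<in> s) F"
  shows "limitin (topology_generated_by S) f l F"
  unfolding limitin_def
proof (intro conjI allI impI)
  show "l \<in> topspace (topology_generated_by S)" using assms(1) by simp
  fix U assume "openin (topology_generated_by S) U \<and> l \<in> U"
  then have "generate_topology_on S U" "l \<in> U" by (auto simp: openin_topology_generated_by_iff)
  then show "eventually (\<lambda>x. f x \<in> U) F"
  proof (induction rule: generate_topology_on.induct)
    case (Int a b) then show ?case by (auto elim: eventually_elim2)
  next
    case (UN K)
    then obtain k where "k \<in> K" "l \<in> k" by blast
    with UN.IH have "eventually (\<lambda>x. f x \<in> k) F" by blast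
    then show ?case using \<open>k \<in> K\<close> by (auto elim: eventually_mono)
  qed (use assms(2) in auto)
qed

text \<open>\<open>L\<^sub>1\<^sup>k\<close> tends to zero weakly: it moves every vector onto words of length at least \<open>k\<close>,
  where any fixed square-summable vector has small mass.\<close>

lemma vinner_L1_pow_tendsto_0:
  assumes x: "x \<in> ell2" and y: "y \<in> ell2"
  shows "(\<lambda>k. vinner (L1_pow k x) y) \<longlonglongrightarrow> 0"
proof (rule LIMSEQ_I)
  fix r :: real assume r: "r > 0"
  define e where "e = r / (sqnorm x + 1)"
  have e: "e > 0" "e * sqnorm x < r"
    using r sqnorm_nonneg[of x] by (simp_all add: e_def field_simps)
  obtain F where F: "finite F" "\<And>B. B \<inter> F = {} \<Longrightarrow> infsum (\<lambda>u. (cmod (y u))^2) B \<le> e * r / 2"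
    using summable_on_tail_le[of "\<lambda>u. (cmod (y u))^2" "e * r / 2"] y e r unfolding mem_ell2_iff by auto
  obtain L where L: "\<And>u. u \<in> F \<Longrightarrow> length u < L"
    using finite_nat_bounded[OF finite_imageI[OF F(1), of length]] by auto
  have "cmod (vinner (L1_pow k x) y - 0) < r" if k: "k \<ge> L" for k
  proof -
    define yB where "yB = (\<lambda>u. if u \<in> {u. k \<le> length u} then y u else 0)"
    have "{u. k \<le> length u} \<inter> F = {}"
      using L k by fastforce
    then have "sqnorm yB \<le> e * r / 2"
      unfolding yB_def sqnorm_restrict by (rule F(2))
    then have small: "sqnorm yB / e \<le> r / 2"
      using e by (simp add: field_simps)
    have "vinner (L1_pow k x) y = vinner (L1_pow k x) yB"
      unfolding vinner_def yB_def by (rule infsum_cong) (auto simp: L1_pow_def)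
    then have "cmod (vinner (L1_pow k x) y) \<le> (e * sqnorm x + sqnorm yB / e) / 2"
      using cmod_vinner_le[of "L1_pow k x" yB e] x y e
      by (simp add: L1_pow_ell2_iff sqnorm_L1_pow yB_def ell2_restrict)
    also have "\<dots> < r" using small e(2) r by argo
    finally show ?thesis by simp
  qed
  then show "\<exists>L. \<forall>k\<ge>L. norm (vinner (L1_pow k x) y - 0) < r" by blast
qed

lemma L1_pow_wstar_tendsto_zero_op:
  assumes n: "n \<ge> 1"
  shows "limitin (wstar_top (fock n)) L1_pow zero_op sequentially"
  unfolding wstar_top_def
proof (rule limitin_topology_generated_by)
  let ?S = "{{T. (\<Sum>k. vinner (T (xs k)) (ys k)) \<in> U} | xs ys U.
        (\<forall>k. xs k \<in> fock n \<and> ys k \<in> fock n) \<and> summable (\<lambda>k. (vnorm (xs k))^2)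
        \<and> summable (\<lambda>k. (vnorm (ys k))^2) \<and> open U}"
  have "UNIV \<in> ?S"
    by (intro CollectI exI[of _ "\<lambda>_. vzero"] exI[of _ UNIV])
       (use vzero_fock in \<open>auto simp: vnorm_def vzero_def\<close>)
  then show "zero_op \<in> \<Union>?S" by blast
  fix s assume "s \<in> ?S" and zero: "zero_op \<in> s"
  then obtain xs ys U where s: "s = {T. (\<Sum>k. vinner (T (xs k)) (ys k)) \<in> U}"
    and xs: "\<And>k. xs k \<in> ell2" and ys: "\<And>k. ys k \<in> ell2"
    and sx: "summable (\<lambda>k. (vnorm (xs k))^2)" and sy: "summable (\<lambda>k. (vnorm (ys k))^2)"
    and U: "open U"
    using fock_ell2 by blast
  have "0 \<in> U" using zero unfolding s by (simp add: zero_op_def vinner_def)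
  define M where "M j = (sqnorm (xs j) + sqnorm (ys j)) / 2" for j
  have "summable M"
    unfolding M_def using summable_add[OF sx sy] by (intro summable_divide) (simp add: vnorm_power2)
  then have "((\<lambda>k. \<Sum>j. vinner (L1_pow k (xs j)) (ys j)) \<longlongrightarrow> (\<Sum>j. 0)) sequentially"
  proof (intro tannerys_theorem[THEN conjunct2, THEN conjunct2])
    show "\<And>j. ((\<lambda>k. vinner (L1_pow k (xs j)) (ys j)) \<longlongrightarrow> 0) sequentially"
      using vinner_L1_pow_tendsto_0[OF xs ys] by blast
    show "\<forall>\<^sub>F (j, k) in sequentially \<times>\<^sub>F sequentially. norm (vinner (L1_pow k (xs j)) (ys j)) \<le> M j"
      using cmod_vinner_le[of "L1_pow _ (xs _)" "ys _" 1] xs ys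
      by (intro always_eventually) (simp add: M_def L1_pow_ell2_iff sqnorm_L1_pow)
  qed simp_all
  from topological_tendstoD[OF this[unfolded suminf_zero] U \<open>0 \<in> U\<close>]
  show "eventually (\<lambda>k. L1_pow k \<in> s) sequentially" unfolding s by simp
qed

lemma openin_wstar_top_vinner_basis_vec:
  assumes "open U"
  shows "openin (wstar_top (ell2 :: nat vec set)) {A. vinner (A (basis_vec j)) (basis_vec j) \<in> U}"
proof -
  define xs :: "nat \<Rightarrow> nat vec" where "xs k = (if k = 0 then basis_vec j else vzero)" for k
  have "(\<Sum>k. vinner (A (xs k)) (xs k)) = vinner (A (basis_vec j)) (basis_vec j)" for A :: "(nat, nat) op"
    by (subst suminf_finite[of "{0}"]) (auto simp: xs_def vinner_def vzero_def)
  moreover have "summable (\<lambda>k. (vnorm (xs k))^2)"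
    by (rule summable_finite[of "{0}"]) (auto simp: xs_def vnorm_def vzero_def)
  then have "openin (wstar_top ell2) {A. (\<Sum>k. vinner (A (xs k)) (xs k)) \<in> U}"
    unfolding wstar_top_def
    by (intro topology_generated_by_Basis CollectI exI[of _ xs] exI[of _ U])
       (use assms in \<open>auto simp: xs_def\<close>)
  ultimately show ?thesis by simp
qed

lemma not_abs_cont_cuntz:
  assumes n: "n \<ge> 2"
  shows "\<not> abs_cont n (ell2 :: nat vec set) (cuntz n)"
proof
  assume "abs_cont n (ell2 :: nat vec set) (cuntz n)"
  then obtain \<Phi> :: "(nat list, nat list) op \<Rightarrow> (nat, nat) op" where
    words: "\<forall>w\<in>words n. \<forall>x\<in>(ell2::nat vec set). \<Phi> (word_op Lcre w) x = word_op (cuntz n) w x"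
    and lin: "\<forall>S\<in>Ln n. \<forall>T\<in>Ln n. \<forall>a b. \<forall>x\<in>(ell2::nat vec set).
          \<Phi> (\<lambda>y u. a * S y u + b * T y u) x = (\<lambda>u. a * \<Phi> S x u + b * \<Phi> T x u)"
    and cont: "continuous_map (subtopology (wstar_top (fock n)) (Ln n)) (wstar_top (ell2::nat vec set)) \<Phi>"
    unfolding abs_cont_def by blast
  have n0: "n > 0" and n1: "n \<ge> 1" using n by auto
  have "limitin (subtopology (wstar_top (fock n)) (Ln n)) L1_pow zero_op sequentially"
    unfolding limitin_subtopology
    using zero_op_mem_Ln L1_pow_mem_Ln[OF n1] L1_pow_wstar_tendsto_zero_op[OF n1] by simp
  then have lim: "limitin (wstar_top ell2) (\<Phi> \<circ> L1_pow) (\<Phi> zero_op) sequentially"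
    by (rule continuous_map_limit[OF cont])
  have "\<Phi> zero_op (basis_vec 0) = \<Phi> (\<lambda>y u. 0 * zero_op y u + 0 * zero_op y u) (basis_vec 0)"
    by (simp add: zero_op_def)
  also have "\<dots> = (\<lambda>u. 0 * \<Phi> zero_op (basis_vec 0) u + 0 * \<Phi> zero_op (basis_vec 0) u)"
    by (rule lin[rule_format, OF zero_op_mem_Ln zero_op_mem_Ln basis_vec_ell2])
  finally have zero: "\<Phi> zero_op (basis_vec 0) = (\<lambda>u. 0)" by simp
  have fixed: "\<Phi> (L1_pow k) (basis_vec 0) = basis_vec 0" for k
  proof -
    have "replicate k 1 \<in> words n" using n1 by (auto simp: words_def set_replicate_conv_if)
    from words[rule_format, OF this basis_vec_ell2]
    have "\<Phi> (L1_pow k) (basis_vec 0) = dilate (n^k) (basis_vec 0)"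
      by (simp only: word_op_Lcre_replicate_1 word_op_cuntz_replicate_1[OF n0])
    then show ?thesis using n0 by (simp add: dilate_basis_vec_0)
  qed
  let ?O = "{A :: (nat, nat) op. vinner (A (basis_vec 0)) (basis_vec 0) \<in> ball 0 (1/2)}"
  have "openin (wstar_top ell2) ?O"
    by (rule openin_wstar_top_vinner_basis_vec) simp
  moreover have "\<Phi> zero_op \<in> ?O" using zero by (simp add: vinner_def)
  ultimately have "eventually (\<lambda>k. (\<Phi> \<circ> L1_pow) k \<in> ?O) sequentially"
    by (rule limitinD[OF lim])
  then show False
    by (simp add: fixed vinner_basis_vec_left) (simp add: basis_vec_def)
qed

section \<open>The tuple is not singular\<close>

lemma topspace_wstar_top: "vzero \<in> H \<Longrightarrow> topspace (wstar_top H) = UNIV"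
proof -
  assume "vzero \<in> H"
  then have "UNIV \<in> {{T. (\<Sum>k. vinner (T (xs k)) (ys k)) \<in> U} | xs ys U.
        (\<forall>k. xs k \<in> H \<and> ys k \<in> H) \<and> summable (\<lambda>k. (vnorm (xs k))^2)
        \<and> summable (\<lambda>k. (vnorm (ys k))^2) \<and> open U}"
    by (intro CollectI exI[of _ "\<lambda>_. vzero"] exI[of _ UNIV]) (auto simp: vnorm_def vzero_def)
  then show ?thesis unfolding wstar_top_def by auto
qed

lemma fock_eq_0: "f \<in> fock n \<Longrightarrow> w \<notin> words n \<Longrightarrow> f w = 0"
  unfolding fock_def by blast

lemma vec_transport_Lcre:
  assumes i: "i \<in> {1..n}" and f: "f \<in> fock n"
  shows "vec_transport ((#) i) (words n) f (Lcre i f)"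
proof
  show "Lcre i f u = 0" if "u \<notin> (#) i ` words n" for u
    using that fock_eq_0[OF f] by (cases u) (auto simp: Lcre_def)
qed (use fock_eq_0[OF f] in \<open>auto simp: Lcre_def\<close>)

lemma Lcre_fock:
  assumes i: "i \<in> {1..n}" and f: "f \<in> fock n"
  shows "Lcre i f \<in> fock n"
  unfolding fock_def
proof (intro CollectI conjI allI impI)
  show "Lcre i f \<in> ell2"
    using vec_transport.ell2_iff[OF vec_transport_Lcre[OF assms]] f by (simp add: fock_ell2)
  show "u \<in> words n" if "Lcre i f u \<noteq> 0" for u
    using that i fock_eq_0[OF f] by (cases u) (auto simp: Lcre_def words_Cons split: if_splits)
qed

lemma word_op_Lcre_fock: "w \<in> words n \<Longrightarrow> f \<in> fock n \<Longrightarrow> word_op Lcre w f \<in> fock n"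
  by (induction w) (auto simp: word_op_def words_Cons intro: Lcre_fock)

text \<open>\<open>V\<^sub>w e\<^sub>1 = e\<^bsub>word_index n w\<^esub>\<close>, so the closed span of these basis vectors is
  a copy of the Fock space on which \<open>V\<close> acts as \<open>L\<close>.\<close>

fun word_index :: "nat \<Rightarrow> nat list \<Rightarrow> nat" where
  "word_index n [] = 1"
| "word_index n (i # w) = n * word_index n w + (i - 1)"

lemma word_index_ge_1: "n \<ge> 1 \<Longrightarrow> word_index n w \<ge> 1"
proof (induction w)
  case (Cons i w)
  then have "1 \<le> n * word_index n w" using mult_le_mono[of 1 n 1 "word_index n w"] by simp
  then show ?case unfolding word_index.simps by (rule trans_le_add1)
qed simp

lemma word_index_Cons_ge_2: "n \<ge> 2 \<Longrightarrow> word_index n (i # w) \<ge> 2"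
  using mult_le_mono[of 2 n 1 "word_index n w"] word_index_ge_1[of n w] by simp

lemma word_index_Cons_mod_div:
  assumes "i \<in> {1..n}"
  shows "word_index n (i # w) mod n = i - 1" "word_index n (i # w) div n = word_index n w"
proof -
  have "i - 1 < n" using assms by auto
  then show "word_index n (i # w) mod n = i - 1" "word_index n (i # w) div n = word_index n w"
    by simp_all
qed

lemma inj_on_word_index:
  assumes n: "n \<ge> 2" shows "inj_on (word_index n) (words n)"
proof -
  have "w = v" if "w \<in> words n" "v \<in> words n" "word_index n w = word_index n v" for w v
    using that
  proof (induction w arbitrary: v)
    case Nil
    show ?case
    proof (cases v)
      case (Cons j v')
      then have "word_index n v \<ge> 2" using word_index_Cons_ge_2[OF n] by blast
      moreover have "word_index n v = 1" using Nil.prems(3) by simp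
      ultimately show ?thesis by linarith
    qed simp
  next
    case (Cons i w)
    show ?case
    proof (cases v)
      case Nil
      then have "word_index n (i # w) = 1" using Cons.prems(3) by simp
      with word_index_Cons_ge_2[OF n, of i w] show ?thesis by linarith
    next
      case (Cons j v')
      have i: "i \<in> {1..n}" "w \<in> words n" and j: "j \<in> {1..n}" "v' \<in> words n"
        using Cons.prems(1,2) \<open>v = j # v'\<close> by (auto simp: words_Cons)
      have eq: "word_index n (i # w) = word_index n (j # v')"
        using Cons.prems(3) \<open>v = j # v'\<close> by simp
      then have "i - 1 = j - 1"
        by (metis word_index_Cons_mod_div(1)[OF i(1)] word_index_Cons_mod_div(1)[OF j(1)])
      with i(1) j(1) have "i = j" by auto
      from eq have "word_index n w = word_index n v'"
        by (metis word_index_Cons_mod_div(2)[OF i(1)] word_index_Cons_mod_div(2)[OF j(1)])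
      with Cons.IH[OF i(2) j(2)] \<open>i = j\<close> show ?thesis using \<open>v = j # v'\<close> by simp
    qed
  qed
  then show ?thesis unfolding inj_on_def by blast
qed

definition word_indices :: "nat \<Rightarrow> nat set" where
  "word_indices n = word_index n ` words n"

definition from_fock :: "nat \<Rightarrow> nat list vec \<Rightarrow> nat vec" where
  "from_fock n f = (\<lambda>m. if m \<in> word_indices n then f (the_inv_into (words n) (word_index n) m) else 0)"

definition to_fock :: "nat \<Rightarrow> nat vec \<Rightarrow> nat list vec" where
  "to_fock n x = (\<lambda>w. if w \<in> words n then x (word_index n w) else 0)"

definition fock_copy :: "nat \<Rightarrow> nat vec set" where
  "fock_copy n = {x \<in> ell2. \<forall>m. m \<notin> word_indices n \<longrightarrow> x m = 0}"

lemma from_fock_lin_comb: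
  "from_fock n (\<lambda>i. a * x i + b * y i) = (\<lambda>i. a * from_fock n x i + b * from_fock n y i)"
  by (rule ext) (simp add: from_fock_def)

lemma to_fock_lin_comb:
  "to_fock n (\<lambda>i. a * x i + b * y i) = (\<lambda>i. a * to_fock n x i + b * to_fock n y i)"
  by (rule ext) (simp add: to_fock_def)

context
  fixes n :: nat
  assumes n: "n \<ge> 2"
begin

lemma vec_transport_from_fock:
  assumes f: "f \<in> fock n"
  shows "vec_transport (word_index n) (words n) f (from_fock n f)"
  by unfold_locales
     (auto simp: from_fock_def word_indices_def the_inv_into_f_f[OF inj_on_word_index[OF n]]
       inj_on_word_index[OF n] fock_eq_0[OF f])

lemma vec_transport_to_fock:
  assumes x: "x \<in> fock_copy n"
  shows "vec_transport (word_index n) (words n) (to_fock n x) x"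
  using x by unfold_locales (auto simp: to_fock_def fock_copy_def word_indices_def inj_on_word_index[OF n])

lemma from_fock_mem_fock_copy:
  assumes f: "f \<in> fock n" shows "from_fock n f \<in> fock_copy n"
  unfolding fock_copy_def
proof (intro CollectI conjI allI impI)
  show "from_fock n f \<in> ell2"
    using vec_transport.ell2_iff[OF vec_transport_from_fock[OF f]] fock_ell2[OF f] by blast
  show "from_fock n f m = 0" if "m \<notin> word_indices n" for m
    using that by (simp add: from_fock_def)
qed

lemma sqnorm_from_fock: "f \<in> fock n \<Longrightarrow> sqnorm (from_fock n f) = sqnorm f"
  by (rule vec_transport.sqnorm_eq[OF vec_transport_from_fock])

lemma vinner_from_fock:
  assumes f: "f \<in> fock n" shows "vinner (from_fock n f) y = vinner f (to_fock n y)"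
proof -
  have "vinner (from_fock n f) y = vinner f (\<lambda>w. y (word_index n w))"
    by (rule vec_transport.vinner_eq[OF vec_transport_from_fock[OF f]])
  also have "\<dots> = vinner f (to_fock n y)"
    unfolding vinner_def by (rule infsum_cong) (auto simp: to_fock_def fock_eq_0[OF f])
  finally show ?thesis .
qed

lemma to_fock_mem_fock:
  assumes x: "x \<in> fock_copy n" shows "to_fock n x \<in> fock n"
  unfolding fock_def
proof (intro CollectI conjI allI impI)
  show "to_fock n x \<in> ell2"
    using vec_transport.ell2_iff[OF vec_transport_to_fock[OF x]] x by (simp add: fock_copy_def)
  show "w \<in> words n" if "to_fock n x w \<noteq> 0" for w
    using that by (simp add: to_fock_def split: if_splits)
qed

lemma sqnorm_to_fock: "x \<in> fock_copy n \<Longrightarrow> sqnorm (to_fock n x) = sqnorm x"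
  by (rule vec_transport.sqnorm_eq[OF vec_transport_to_fock, symmetric])

lemma to_fock_from_fock:
  assumes f: "f \<in> fock n" shows "to_fock n (from_fock n f) = f"
proof
  fix w
  show "to_fock n (from_fock n f) w = f w"
    using vec_transport.on_image[OF vec_transport_from_fock[OF f], of w] fock_eq_0[OF f, of w]
    by (simp add: to_fock_def)
qed

lemma from_fock_to_fock: "x \<in> fock_copy n \<Longrightarrow> from_fock n (to_fock n x) = x"
  using vec_transport_unique[OF vec_transport_from_fock[OF to_fock_mem_fock] vec_transport_to_fock] .

text \<open>Both sides are transports of \<open>f\<close> along \<open>w \<mapsto> word_index n (i # w)\<close>.\<close>

lemma from_fock_Lcre:
  assumes f: "f \<in> fock n" and i: "i \<in> {1..n}"
  shows "from_fock n (Lcre i f) = cuntz n i (from_fock n f)"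
proof (rule vec_transport_unique)
  show "vec_transport (word_index n \<circ> (#) i) (words n) f (from_fock n (Lcre i f))"
    by (rule vec_transport_comp[OF vec_transport_Lcre[OF i f] vec_transport_from_fock[OF Lcre_fock[OF i f]]])
       (use i in \<open>auto simp: words_Cons\<close>)
  have "vec_transport ((\<lambda>l. n * l + (i - 1)) \<circ> word_index n) (words n) f (cuntz n i (from_fock n f))"
    using n i by (intro vec_transport_comp[OF vec_transport_from_fock[OF f] vec_transport_cuntz]) auto
  then show "vec_transport (word_index n \<circ> (#) i) (words n) f (cuntz n i (from_fock n f))"
    by (simp add: comp_def)
qed

lemma from_fock_word_op:
  "w \<in> words n \<Longrightarrow> f \<in> fock n \<Longrightarrow> from_fock n (word_op Lcre w f) = word_op (cuntz n) w (from_fock n f)"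
proof (induction w)
  case (Cons i w)
  then have i: "i \<in> {1..n}" and w: "w \<in> words n" by (auto simp: words_Cons)
  have "from_fock n (word_op Lcre (i # w) f) = from_fock n (Lcre i (word_op Lcre w f))"
    by (simp add: word_op_def)
  also have "\<dots> = cuntz n i (from_fock n (word_op Lcre w f))"
    by (rule from_fock_Lcre[OF word_op_Lcre_fock[OF w Cons.prems(2)] i])
  also have "\<dots> = cuntz n i (word_op (cuntz n) w (from_fock n f))"
    using Cons.IH[OF w Cons.prems(2)] by simp
  finally show ?case by (simp add: word_op_def)
qed (simp add: word_op_def)

lemma closed_subspace_fock_copy: "closed_subspace ell2 (fock_copy n)"
  unfolding closed_subspace_def
proof (intro conjI ballI allI impI)
  show "fock_copy n \<subseteq> ell2" "vzero \<in> fock_copy n"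
    using vzero_ell2 by (auto simp: fock_copy_def vzero_def)
  show "(\<lambda>i. a * x i + b * y i) \<in> fock_copy n" if "x \<in> fock_copy n" "y \<in> fock_copy n" for x y a b
    using that ell2_lin_comb by (auto simp: fock_copy_def)
  fix s x assume h: "(\<forall>k. s k \<in> fock_copy n) \<and> x \<in> ell2 \<and> (\<lambda>k. vnorm (\<lambda>i. s k i - x i)) \<longlonglongrightarrow> 0"
  have "x m = 0" if m: "m \<notin> word_indices n" for m
  proof -
    have "cmod (x m) \<le> vnorm (\<lambda>i. s k i - x i)" for k
    proof -
      have "s k \<in> ell2" "s k m = 0" using h m by (auto simp: fock_copy_def)
      with h show ?thesis
        using cmod_le_vnorm[OF ell2_lin_comb[of "s k" x 1 "-1"], of m] by simp
    qed
    then have "cmod (x m) \<le> 0" using h by (intro LIMSEQ_le_const) auto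
    then show ?thesis by simp
  qed
  with h show "x \<in> fock_copy n" by (simp add: fock_copy_def)
qed

lemma invariant_sub_fock_copy: "invariant_sub ell2 n (cuntz n) (fock_copy n)"
  unfolding invariant_sub_def
proof (intro conjI ballI closed_subspace_fock_copy)
  fix i x assume i: "i \<in> {1..n}" and x: "x \<in> fock_copy n"
  then have "cuntz n i x = from_fock n (Lcre i (to_fock n x))"
    by (simp add: from_fock_Lcre to_fock_mem_fock from_fock_to_fock)
  then show "cuntz n i x \<in> fock_copy n"
    using i x by (simp add: from_fock_mem_fock_copy Lcre_fock to_fock_mem_fock)
qed

lemma fock_copy_ne_vzero: "fock_copy n \<noteq> {vzero}"
proof -
  have "1 \<in> word_indices n"
    unfolding word_indices_def words_def by (rule image_eqI[of _ _ "[]"]) auto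
  then have "basis_vec 1 \<in> fock_copy n"
    using basis_vec_ell2[of "1::nat"] by (auto simp: fock_copy_def basis_vec_def)
  moreover have "basis_vec (1::nat) \<noteq> vzero"
    by (auto simp: basis_vec_def vzero_def fun_eq_iff)
  ultimately show ?thesis by blast
qed

definition fock_rep :: "(nat list, nat list) op \<Rightarrow> (nat, nat) op" where
  "fock_rep T x = from_fock n (T (to_fock n x))"

lemma bounded_op_fock_rep:
  assumes T: "bounded_op (fock n) T" shows "bounded_op (fock_copy n) (fock_rep T)"
  unfolding bounded_op_def
proof (intro conjI ballI allI)
  have fock: "to_fock n x \<in> fock n" "T (to_fock n x) \<in> fock n" if "x \<in> fock_copy n" for x
    using to_fock_mem_fock[OF that] bounded_op_maps[OF T] by auto
  show "fock_rep T x \<in> fock_copy n" if "x \<in> fock_copy n" for x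
    unfolding fock_rep_def by (rule from_fock_mem_fock_copy[OF fock(2)[OF that]])
  show "fock_rep T (\<lambda>i. a * x i + b * y i) = (\<lambda>i. a * fock_rep T x i + b * fock_rep T y i)"
    if "x \<in> fock_copy n" "y \<in> fock_copy n" for x y a b
    unfolding fock_rep_def to_fock_lin_comb bounded_op_lin_comb[OF T fock(1)[OF that(1)] fock(1)[OF that(2)]]
    by (rule from_fock_lin_comb)
  obtain C where C: "\<And>f. f \<in> fock n \<Longrightarrow> vnorm (T f) \<le> C * vnorm f"
    using bounded_opE[OF T] by blast
  have "vnorm (fock_rep T x) \<le> C * vnorm x" if "x \<in> fock_copy n" for x
    using C[OF fock(1)[OF that]] sqnorm_from_fock[OF fock(2)[OF that]] sqnorm_to_fock[OF that]
    by (simp add: fock_rep_def vnorm_eq_sqrt_sqnorm)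
  then show "\<exists>C. \<forall>x\<in>fock_copy n. vnorm (fock_rep T x) \<le> C * vnorm x" by blast
qed

lemma vinner_fock_rep:
  assumes "bounded_op (fock n) T" "x \<in> fock_copy n"
  shows "vinner (fock_rep T x) y = vinner (T (to_fock n x)) (to_fock n y)"
  unfolding fock_rep_def
  by (rule vinner_from_fock[OF bounded_op_maps[OF assms(1) to_fock_mem_fock[OF assms(2)]]])

lemma continuous_map_fock_rep:
  "continuous_map (subtopology (wstar_top (fock n)) (Ln n)) (wstar_top (fock_copy n)) fock_rep"
proof -
  have "topspace (wstar_top (fock_copy n)) = UNIV"
    by (rule topspace_wstar_top[OF closed_subspace_vzero[OF closed_subspace_fock_copy]])
  then have image: "fock_rep ` topspace (subtopology (wstar_top (fock n)) (Ln n)) \<subseteq>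
      \<Union>{{T. (\<Sum>k. vinner (T (xs k)) (ys k)) \<in> U} | xs ys U.
        (\<forall>k. xs k \<in> fock_copy n \<and> ys k \<in> fock_copy n) \<and> summable (\<lambda>k. (vnorm (xs k))^2)
        \<and> summable (\<lambda>k. (vnorm (ys k))^2) \<and> open U}"
    unfolding wstar_top_def by simp
  show ?thesis
    unfolding wstar_top_def[of "fock_copy n"]
  proof (rule continuous_on_generated_topo)
    fix U assume "U \<in> {{T. (\<Sum>k. vinner (T (xs k)) (ys k)) \<in> U} | xs ys U.
        (\<forall>k. xs k \<in> fock_copy n \<and> ys k \<in> fock_copy n) \<and> summable (\<lambda>k. (vnorm (xs k))^2)
        \<and> summable (\<lambda>k. (vnorm (ys k))^2) \<and> open U}"
    then obtain xs ys V where U: "U = {T. (\<Sum>k. vinner (T (xs k)) (ys k)) \<in> V}"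
      and xs: "\<And>k. xs k \<in> fock_copy n" and ys: "\<And>k. ys k \<in> fock_copy n"
      and sx: "summable (\<lambda>k. (vnorm (xs k))^2)" and sy: "summable (\<lambda>k. (vnorm (ys k))^2)"
      and V: "open V"
      by blast
    define W where
      "W = {T :: (nat list, nat list) op. (\<Sum>k. vinner (T (to_fock n (xs k))) (to_fock n (ys k))) \<in> V}"
    have "vnorm (to_fock n x) = vnorm x" if "x \<in> fock_copy n" for x
      using sqnorm_to_fock[OF that] by (simp add: vnorm_eq_sqrt_sqnorm)
    then have "openin (wstar_top (fock n)) W"
      unfolding wstar_top_def W_def
      by (intro topology_generated_by_Basis CollectI exI[of _ "\<lambda>k. to_fock n (xs k)"]
          exI[of _ "\<lambda>k. to_fock n (ys k)"] exI[of _ V])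
         (use xs ys sx sy V to_fock_mem_fock in auto)
    moreover have "fock_rep -` U \<inter> topspace (subtopology (wstar_top (fock n)) (Ln n)) = Ln n \<inter> W"
    proof -
      have "fock_rep T \<in> U \<longleftrightarrow> T \<in> W" if "T \<in> Ln n" for T
        using that vinner_fock_rep[OF _ xs] unfolding U W_def Ln_def by simp
      then show ?thesis using topspace_wstar_top[OF vzero_fock, of n] by auto
    qed
    ultimately show "openin (subtopology (wstar_top (fock n)) (Ln n))
        (fock_rep -` U \<inter> topspace (subtopology (wstar_top (fock n)) (Ln n)))"
      using openin_subtopology_Int2 by metis
  qed (rule image)
qed

lemma abs_cont_fock_copy: "abs_cont n (fock_copy n) (cuntz n)"
  unfolding abs_cont_def
proof (intro exI[of _ fock_rep] conjI ballI allI continuous_map_fock_rep)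
  show "bounded_op (fock_copy n) (fock_rep T)" if "T \<in> Ln n" for T
    using that by (intro bounded_op_fock_rep) (simp add: Ln_def)
  show "fock_rep (word_op Lcre w) x = word_op (cuntz n) w x" if "w \<in> words n" "x \<in> fock_copy n" for w x
    unfolding fock_rep_def using that
    by (simp add: from_fock_word_op to_fock_mem_fock from_fock_to_fock)
  show "fock_rep (\<lambda>y u. a * S y u + b * T y u) x = (\<lambda>u. a * fock_rep S x u + b * fock_rep T x u)"
    for S T a b x
    unfolding fock_rep_def by (rule from_fock_lin_comb)
  show "fock_rep (S \<circ> T) x = fock_rep S (fock_rep T x)" if "T \<in> Ln n" "x \<in> fock_copy n" for S T x
    using that bounded_op_maps[of "fock n" T] to_fock_mem_fock
    by (simp add: fock_rep_def Ln_def to_fock_from_fock)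
  show "fock_rep id x = x" if "x \<in> fock_copy n" for x
    unfolding fock_rep_def using that by (simp add: from_fock_to_fock)
qed

lemma not_singular_cuntz: "\<not> singular_tuple n (ell2 :: nat vec set) (cuntz n)"
  unfolding singular_tuple_def
  using abs_cont_fock_copy invariant_sub_fock_copy fock_copy_ne_vzero by blast

end

theorem mainTheorem10:
  fixes n :: nat and V :: "nat \<Rightarrow> (nat, nat) op"
  assumes "n \<ge> 2"
    and "\<And>k x m. V k x m = (if m mod n = k - 1 then x (m div n) else 0)"
  shows "isometric_tuple (ell2 :: nat vec set) n V
       \<and> wstar_alg (ell2 :: nat vec set) n V = {T. bounded_op ell2 T}
       \<and> dilation_type n (ell2 :: nat vec set) V"
proof -
  have V: "V = cuntz n" by (intro ext) (simp add: assms(2) cuntz_def)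
  have "dilation_type n ell2 (cuntz n)"
    unfolding dilation_type_def
    using reducing_sub_cuntz_eq_ell2[OF assms(1)] not_abs_cont_cuntz[OF assms(1)]
      not_singular_cuntz[OF assms(1)] by blast
  then show ?thesis
    unfolding V using isometric_tuple_cuntz assms(1) wstar_alg_cuntz[OF assms(1)] by simp
qed

end
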